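(* For each integer $n\ge0$ let $\theta^\Delta_n(x)=\sum_{k=0}^n\frac{(n+k)!}{2^k(n-k)!\,k!}(x)_{n-k}$, where $(x)_j=x(x-1)\cdots(x-j+1)$ and $(x)_0=1$. (i) The identity \[ \frac{e^{-i\pi x}}{2i\sin\pi x\,\Gamma(-x)}\int_{-\infty}^{(0+)}e^{\lambda}(-\lambda)^{-x-1}\frac{1}{\sqrt{1-2t}}\exp\big[\lambda(1-\sqrt{1-2t})\big]\,d\lambda=\sum_{n=0}^\infty\theta^\Delta_n(x)\frac{t^n}{n!} \] holds, where the series converges uniformly on each compact subset of $\mathbb{C}\times\{t:|t|<\tfrac12\}$. (ii) The generating function $f(x,t)$ in (i) satisfies \[ f_t(x+1,t)-2f_t(x,t)+xf(x-1,t)=0,\qquad (1-2t)f_t(x,t)+(x-1)f(x,t)-2xf(x-1,t)=0 . \]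
   Context: The integral is over a Hankel contour starting at $-\infty$ below the negative real axis, circling the origin counterclockwise and returning to $-\infty$ above the negative real axis; $(-\lambda)^{-x-1}$ uses the principal branch and $\sqrt{1-2t}$ is the principal branch (equal to $1$ at $t=0$). *)

theory Defs
  imports "HOL-Complex_Analysis.Complex_Analysis"
begin

definition falling_fact :: "complex \<Rightarrow> nat \<Rightarrow> complex" where
  "falling_fact x j = (\<Prod>i<j. x - of_nat i)"

definition theta_Delta :: "nat \<Rightarrow> complex \<Rightarrow> complex" where
  "theta_Delta n x = (\<Sum>k=0..n. of_real (fact (n + k) / (2 ^ k * fact (n - k) * fact k))
                                  * falling_fact x (n - k))"

definition gen_f :: "complex \<Rightarrow> complex \<Rightarrow> complex" where
  "gen_f x t = (\<Sum>n. theta_Delta n x * t ^ n / fact n)"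

text \<open>The power (-lambda)^(-x-1), with the branch that is real-valued (principal) on the
  upper side of the negative real axis and continuous along the Hankel contour, which
  encircles the origin and crosses the positive real axis; equivalently
  arg(-lambda) = arg(lambda) - pi with the principal arg of lambda.\<close>
definition hankel_pow :: "complex \<Rightarrow> complex \<Rightarrow> complex" where
  "hankel_pow x z = exp ((- x - 1) * (Ln z - \<i> * of_real pi))"

definition hankel_integrand :: "complex \<Rightarrow> complex \<Rightarrow> complex \<Rightarrow> complex" where
  "hankel_integrand x t z =
     exp z * hankel_pow x z * (1 / csqrt (1 - 2 * t)) * exp (z * (1 - csqrt (1 - 2 * t)))"

text \<open>It starts below the negative real axis, circles the origin
  counterclockwise and returns above the negative real axis; the Hankel integral
  is the limit R \<rightarrow> \<infinity>.\<close>
definition hankel_path :: "real \<Rightarrow> real \<Rightarrow> complex" where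
  "hankel_path R = linepath (- of_real R - \<i>) (1 - \<i>) +++
                   (linepath (1 - \<i>) (1 + \<i>) +++ linepath (1 + \<i>) (- of_real R + \<i>))"

end

theory Submission
  imports Defs "HOL-Real_Asymp.Real_Asymp"
begin

text \<open>
  Since \<open>e\<^sup>\<lambda> e\<^bsup>\<lambda>(1 - \<surd>(1 - 2t))\<^esup> = e\<^bsup>c\<lambda>\<^esup>\<close> with \<open>c = 2 - \<surd>(1 - 2t)\<close> and \<open>Re c > 0\<close>, the integral in (i)
  is Hankel's integral for \<open>1 / \<Gamma>\<close>, so the generating function should be the closed form
  \<open>c\<^sup>x / \<surd>(1 - 2t)\<close>. This closed form satisfies both equations of (ii)
  by direct differentiation. Comparing Taylor coefficients in the second one gives the recurrence
  \<open>\<theta>\<^sub>n\<^sub>+\<^sub>1(x) = (2n + 1 - x) \<theta>\<^sub>n(x) + 2x \<theta>\<^sub>n(x - 1)\<close>, which \<open>\<theta>\<^sup>\<Delta>\<^sub>n\<close> also satisfies (a recurrence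
  for the coefficients of Bessel polynomials); hence the closed form is the sum of the series,
  and Cauchy's estimate with \<open>|Ln c| \<le> 3\<close> gives uniform convergence on compact sets.

  For the integral, when \<open>Re x < -1\<close> the truncated Hankel contour can be collapsed onto the
  negative real axis, where the two boundary values of \<open>(-\<lambda>)\<^bsup>-x-1\<^esup>\<close> differ by the factor
  \<open>e\<^bsup>2\<pi>i(x+1)\<^esup>\<close>; Euler's integral along the ray \<open>arg \<lambda> = \<pi> - arg c\<close> then gives the value
  \<open>(e\<^bsup>2\<pi>i(x+1)\<^esup> - 1) c\<^sup>x \<Gamma>(-x)\<close>. Integration by parts relates the integrals for \<open>x - 1\<close> and \<open>x\<close>,
  and this recurrence carries the limit to every non-integer \<open>x\<close>.
\<close>

section \<open>The closed form of the generating function\<close>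

definition gen_root :: "complex \<Rightarrow> complex" where
  "gen_root t = csqrt (1 - 2 * t)"

definition gen_base :: "complex \<Rightarrow> complex" where
  "gen_base t = 2 - gen_root t"

definition gen_closed :: "complex \<Rightarrow> complex \<Rightarrow> complex" where
  "gen_closed x t = exp (x * Ln (gen_base t)) / gen_root t"

lemma gen_root_squared: "(gen_root t)\<^sup>2 = 1 - 2 * t"
  by (simp add: gen_root_def)

lemma Re_one_minus_double_pos:
  assumes "norm t < 1/2"
  shows "0 < Re (1 - 2 * t)"
  using abs_Re_le_cmod[of t] assms by simp

lemma Re_gen_root_pos:
  assumes "norm t < 1/2"
  shows "0 < Re (gen_root t)"
proof (rule ccontr)
  assume "\<not> 0 < Re (gen_root t)"
  with csqrt_principal[of "1 - 2 * t"] have "Re (gen_root t) = 0"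
    unfolding gen_root_def by auto
  hence "Re ((gen_root t)\<^sup>2) \<le> 0" by (simp add: power2_eq_square)
  with Re_one_minus_double_pos[OF assms] show False by (simp add: gen_root_squared)
qed

lemma gen_root_nonzero: "norm t < 1/2 \<Longrightarrow> gen_root t \<noteq> 0"
  using Re_gen_root_pos by fastforce

lemma norm_gen_base_minus_one:
  assumes "norm t < 1/2"
  shows "norm (gen_base t - 1) < 1"
proof -
  define s where "s = gen_root t"
  have "1 < Re (s + 1)" using Re_gen_root_pos[OF assms] by (simp add: s_def)
  also have "\<dots> \<le> norm (s + 1)" by (rule complex_Re_le_cmod)
  finally have big: "1 < norm (s + 1)" .
  have "(s - 1) * (s + 1) = - 2 * t"
    using gen_root_squared[of t] by (simp add: s_def algebra_simps power2_eq_square)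
  hence "norm (s - 1) * norm (s + 1) = 2 * norm t"
    by (metis norm_minus_cancel norm_mult mult_minus_left norm_numeral)
  moreover have "norm (s - 1) \<le> norm (s - 1) * norm (s + 1)"
    using big by (simp add: mult_le_cancel_left1)
  ultimately have "norm (s - 1) < 1"
    using assms by linarith
  thus ?thesis by (simp add: gen_base_def s_def norm_minus_commute)
qed

lemma Re_gen_base_pos:
  assumes "norm t < 1/2"
  shows "0 < Re (gen_base t)"
  using abs_Re_le_cmod[of "gen_base t - 1"] norm_gen_base_minus_one[OF assms] by simp

lemma gen_base_nonzero: "norm t < 1/2 \<Longrightarrow> gen_base t \<noteq> 0"
  using Re_gen_base_pos by fastforce

lemma gen_base_notin_nonpos_Reals:
  assumes "norm t < 1/2"
  shows "gen_base t \<notin> \<real>\<^sub>\<le>\<^sub>0"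
  using Re_gen_base_pos[OF assms] by (auto simp: complex_nonpos_Reals_iff)

lemma gen_root_has_derivative:
  assumes "norm t < 1/2"
  shows "(gen_root has_field_derivative - 1 / gen_root t) (at t)"
proof -
  have "1 - 2 * t \<notin> \<real>\<^sub>\<le>\<^sub>0"
    using Re_one_minus_double_pos[OF assms] by (auto simp: complex_nonpos_Reals_iff)
  hence "((\<lambda>t. csqrt (1 - 2 * t)) has_field_derivative
           inverse (2 * csqrt (1 - 2 * t)) * (0 - 2 * 1)) (at t)"
    by (intro DERIV_chain2[OF has_field_derivative_csqrt] derivative_intros) auto
  thus ?thesis
    using gen_root_nonzero[OF assms] by (simp add: gen_root_def [abs_def] field_simps)
qed

lemma gen_closed_has_derivative:
  assumes t: "norm t < 1/2"
  shows "(gen_closed x has_field_derivative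
           gen_closed x t * (x / (gen_base t * gen_root t) + 1 / (gen_root t)\<^sup>2)) (at t)"
proof -
  have base: "(gen_base has_field_derivative 1 / gen_root t) (at t)"
    using gen_root_has_derivative[OF t] unfolding gen_base_def [abs_def]
    by (auto intro!: derivative_eq_intros)
  have "((\<lambda>t. exp (x * Ln (gen_base t)) / gen_root t) has_field_derivative
          ((exp (x * Ln (gen_base t)) * (x * (1 / gen_root t / gen_base t))) * gen_root t
            - exp (x * Ln (gen_base t)) * (- 1 / gen_root t)) / (gen_root t * gen_root t)) (at t)"
    using gen_root_nonzero[OF t] gen_base_notin_nonpos_Reals[OF t]
    by (auto intro!: derivative_eq_intros base gen_root_has_derivative[OF t] simp: field_simps)
  thus ?thesis
    using gen_root_nonzero[OF t] gen_base_nonzero[OF t] unfolding gen_closed_def [abs_def]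
    by (simp add: field_simps power2_eq_square)
qed

lemma gen_closed_holomorphic: "gen_closed x holomorphic_on ball 0 (1/2)"
  unfolding holomorphic_on_open[OF open_ball] using gen_closed_has_derivative
  by (meson mem_ball_0)

lemma gen_closed_shift:
  assumes "norm t < 1/2"
  shows "gen_closed (x + 1) t = gen_base t * gen_closed x t"
    and "gen_closed (x - 1) t = gen_closed x t / gen_base t"
  using gen_base_nonzero[OF assms]
  by (simp_all add: gen_closed_def distrib_right left_diff_distrib exp_add exp_diff)

lemma gen_closed_ode:
  assumes t: "norm t < 1/2"
  shows "(1 - 2 * t) * deriv (gen_closed x) t + (x - 1) * gen_closed x t
           - 2 * x * gen_closed (x - 1) t = 0"
proof -
  have "(1 - 2 * t) * deriv (gen_closed x) t + (x - 1) * gen_closed x t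
           - 2 * x * gen_closed (x - 1) t
        = gen_closed x t * x * (gen_root t + gen_base t - 2) / gen_base t"
    using gen_root_nonzero[OF t] gen_base_nonzero[OF t]
    by (simp add: DERIV_imp_deriv[OF gen_closed_has_derivative[OF t]] gen_closed_shift[OF t]
          flip: gen_root_squared) (simp add: field_simps power2_eq_square)
  thus ?thesis by (simp add: gen_base_def)
qed

lemma gen_closed_difference_ode:
  assumes t: "norm t < 1/2"
  shows "deriv (gen_closed (x + 1)) t - 2 * deriv (gen_closed x) t + x * gen_closed (x - 1) t = 0"
proof -
  define s c where "s = gen_root t" and "c = gen_base t"
  have "deriv (gen_closed (x + 1)) t - 2 * deriv (gen_closed x) t + x * gen_closed (x - 1) t
        = gen_closed x t * ((x + 1) * c * s + c\<^sup>2 - 2 * x * s - 2 * c + x * s\<^sup>2) / (c * s\<^sup>2)"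
    using gen_root_nonzero[OF t] gen_base_nonzero[OF t]
    by (simp add: DERIV_imp_deriv[OF gen_closed_has_derivative[OF t]] gen_closed_shift[OF t]
          s_def c_def) (simp add: field_simps power2_eq_square)
  also have "(x + 1) * c * s + c\<^sup>2 - 2 * x * s - 2 * c + x * s\<^sup>2 = 0"
    by (simp add: c_def gen_base_def s_def[symmetric] algebra_simps power2_eq_square)
  finally show ?thesis by simp
qed

section \<open>Taylor coefficients\<close>

definition bessel_coeff :: "nat \<Rightarrow> nat \<Rightarrow> real" where
  "bessel_coeff n k = fact (n + k) / (2 ^ k * fact (n - k) * fact k)"

lemma theta_Delta_bessel_coeff:
  "theta_Delta n x = (\<Sum>k<Suc n. of_real (bessel_coeff n k) * falling_fact x (n - k))"
  by (simp add: theta_Delta_def bessel_coeff_def atLeast0AtMost lessThan_Suc_atMost)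

lemma bessel_coeff_0 [simp]: "bessel_coeff n 0 = 1"
  by (simp add: bessel_coeff_def)

lemma bessel_coeff_Suc_Suc:
  assumes "k < n"
  shows "bessel_coeff (Suc n) (Suc k) = bessel_coeff n (Suc k) + real (n + k + 1) * bessel_coeff n k"
proof -
  obtain p where n: "n = Suc (k + p)" using assms less_iff_Suc_add by blast
  have idx: "Suc n - Suc k = Suc p" "n - Suc k = p" "n - k = Suc p"
       "Suc n + Suc k = Suc (Suc (Suc (2 * k + p)))" "n + Suc k = Suc (Suc (2 * k + p))"
       "n + k = Suc (2 * k + p)"
    by (simp_all add: n)
  define Q where "Q = (fact (2 * k + p) :: real) / (2 ^ k * fact p * fact k)"
  have lhs: "bessel_coeff (Suc n) (Suc k)
          = ((2*k+p+3) * (2*k+p+2) * (2*k+p+1) / (2 * (p+1) * (k+1))) * Q"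
    unfolding bessel_coeff_def idx Q_def by (simp add: field_simps)
  have rhs1: "bessel_coeff n (Suc k) = ((2*k+p+2) * (2*k+p+1) / (2 * (k+1))) * Q"
    unfolding bessel_coeff_def idx Q_def by (simp add: field_simps)
  have rhs2: "bessel_coeff n k = ((2*k+p+1) / (p+1)) * Q"
    unfolding bessel_coeff_def idx Q_def by (simp add: field_simps)
  have rhs3: "real (n + k + 1) = 2*k+p+2"
    by (simp add: n)
  have "(2*k+p+3) * (2*k+p+2) * (2*k+p+1) / (2 * (p+1) * (k+1))
      = (2*k+p+2) * (2*k+p+1) / (2 * (k+1)) + (2*k+p+2) * ((2*k+p+1) / (p+1) :: real)"
    by (simp add: field_simps)
  then show ?thesis unfolding lhs rhs1 rhs2 rhs3 by (simp add: algebra_simps)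
qed

lemma bessel_coeff_diag_Suc: "bessel_coeff (Suc n) (Suc n) = real (2 * n + 1) * bessel_coeff n n"
proof -
  have idx: "Suc n + Suc n = Suc (Suc (2 * n))" "n + n = 2 * n" by simp_all
  define Q where "Q = (fact (2 * n) :: real) / (2 ^ n * fact n)"
  have diag: "bessel_coeff (Suc n) (Suc n) = ((2*n+2) * (2*n+1) / (2 * (n+1))) * Q"
    unfolding bessel_coeff_def idx Q_def by (simp add: field_simps)
  have "bessel_coeff n n = Q"
    unfolding bessel_coeff_def idx Q_def by (simp add: field_simps)
  moreover have "(2*n+2) * (2*n+1) / (2 * (n+1)) = real (2 * n + 1)"
    by (simp add: field_simps)
  ultimately show ?thesis unfolding diag by simp
qed

lemma falling_fact_Suc: "falling_fact x (Suc j) = falling_fact x j * (x - of_nat j)"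
  by (simp add: falling_fact_def)

lemma falling_fact_minus_one: "x * falling_fact (x - 1) j = falling_fact x (Suc j)"
  unfolding falling_fact_def prod.lessThan_Suc_shift by (simp add: algebra_simps)

lemma falling_fact_three_term:
  "(m - x) * falling_fact x j + 2 * x * falling_fact (x - 1) j
     = (m - of_nat j) * falling_fact x j + falling_fact x (Suc j)"
proof -
  have "2 * x * falling_fact (x - 1) j = 2 * falling_fact x j * (x - of_nat j)"
    by (simp add: mult.assoc falling_fact_minus_one falling_fact_Suc)
  thus ?thesis by (simp add: falling_fact_Suc algebra_simps)
qed

lemma theta_Delta_Suc:
  "theta_Delta (Suc n) x = (2 * of_nat n + 1 - x) * theta_Delta n x + 2 * x * theta_Delta n (x - 1)"
proof -
  define b where "b k = (of_real (bessel_coeff n k) :: complex)" for k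
  define c where "c k = (of_nat (n + k + 1) :: complex)" for k
  define ff where "ff = falling_fact x"
  have summand: "(2 * of_nat n + 1 - x) * ff (n - k) + 2 * x * falling_fact (x - 1) (n - k)
      = c k * ff (n - k) + ff (Suc (n - k))" if "k \<le> n" for k
    using falling_fact_three_term[of "2 * of_nat n + 1" x "n - k"] that
    by (simp add: ff_def c_def of_nat_diff algebra_simps)
  have ff0: "ff 0 = 1" by (simp add: ff_def falling_fact_def)
  have top: "of_real (bessel_coeff (Suc n) (Suc n)) = c n * b n"
    by (simp add: bessel_coeff_diag_Suc b_def c_def mult_2 [symmetric])
  have "theta_Delta (Suc n) x
      = ff (Suc n) + (\<Sum>k<n. (b (Suc k) + c k * b k) * ff (n - k)) + c n * b n"
  proof -
    have "(\<Sum>k<n. of_real (bessel_coeff (Suc n) (Suc k)) * ff (n - k))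
        = (\<Sum>k<n. (b (Suc k) + c k * b k) * ff (n - k))"
      by (intro sum.cong refl) (simp add: b_def c_def bessel_coeff_Suc_Suc)
    thus ?thesis
      unfolding theta_Delta_bessel_coeff[of "Suc n"] sum.lessThan_Suc_shift[of _ "Suc n"] sum.lessThan_Suc[of _ n]
      by (simp add: ff_def [symmetric] ff0 top)
  qed
  also have "\<dots> = (\<Sum>k<Suc n. b k * (c k * ff (n - k))) + (\<Sum>k<Suc n. b k * ff (Suc (n - k)))"
  proof -
    have s1: "(\<Sum>k<Suc n. b k * (c k * ff (n - k))) = (\<Sum>k<n. b k * (c k * ff (n - k))) + c n * b n"
      by (simp add: ff0 mult.commute)
    have s2: "(\<Sum>k<Suc n. b k * ff (Suc (n - k))) = ff (Suc n) + (\<Sum>k<n. b (Suc k) * ff (n - k))"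
      unfolding sum.lessThan_Suc_shift by (simp add: b_def Suc_diff_Suc)
    have s3: "(\<Sum>k<n. (b (Suc k) + c k * b k) * ff (n - k))
        = (\<Sum>k<n. b (Suc k) * ff (n - k)) + (\<Sum>k<n. b k * (c k * ff (n - k)))"
      unfolding sum.distrib [symmetric] by (intro sum.cong refl) (simp add: algebra_simps)
    show ?thesis unfolding s1 s2 s3 by (simp only: add_ac)
  qed
  also have "\<dots> = (2 * of_nat n + 1 - x) * theta_Delta n x + 2 * x * theta_Delta n (x - 1)"
    unfolding theta_Delta_bessel_coeff sum_distrib_left sum.distrib [symmetric]
  proof (intro sum.cong refl)
    fix k assume "k \<in> {..<Suc n}"
    hence "b k * (c k * ff (n - k)) + b k * ff (Suc (n - k))
        = b k * ((2 * of_nat n + 1 - x) * ff (n - k) + 2 * x * falling_fact (x - 1) (n - k))"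
      by (simp add: summand distrib_left)
    thus "b k * (c k * ff (n - k)) + b k * ff (Suc (n - k))
        = (2 * of_nat n + 1 - x) * (of_real (bessel_coeff n k) * falling_fact x (n - k))
          + 2 * x * (of_real (bessel_coeff n k) * falling_fact (x - 1) (n - k))"
      by (simp add: b_def ff_def algebra_simps)
  qed
  finally show ?thesis .
qed

lemma gen_closed_0 [simp]: "gen_closed x 0 = 1"
  by (simp add: gen_closed_def gen_base_def gen_root_def)

lemma gen_closed_has_fps_expansion:
  "gen_closed x has_fps_expansion fps_expansion (gen_closed x) 0"
  by (rule has_fps_expansion_fps_expansion[OF open_ball _ gen_closed_holomorphic]) simp

lemma fps_expansion_gen_closed_Suc:
  "of_nat (Suc n) * fps_expansion (gen_closed x) 0 $ Suc n
     = (2 * of_nat n - x + 1) * fps_expansion (gen_closed x) 0 $ n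
       + 2 * x * fps_expansion (gen_closed (x - 1)) 0 $ n"
proof -
  define A where "A y = fps_expansion (gen_closed y) 0" for y
  define G where "G t = (1 - 2 * t) * deriv (gen_closed x) t + (x - 1) * gen_closed x t
                          - 2 * x * gen_closed (x - 1) t" for t
  have "G has_fps_expansion (1 - fps_const 2 * fps_X) * fps_deriv (A x)
                             + fps_const (x - 1) * A x - fps_const (2 * x) * A (x - 1)"
    unfolding G_def [abs_def] A_def
    by (intro has_fps_expansion_diff has_fps_expansion_add has_fps_expansion_mult
          has_fps_expansion_cmult_left has_fps_expansion_deriv gen_closed_has_fps_expansion
          has_fps_expansion_1 has_fps_expansion_fps_X)
  hence "((1 - fps_const 2 * fps_X) * fps_deriv (A x) + fps_const (x - 1) * A x
           - fps_const (2 * x) * A (x - 1)) $ n = (deriv ^^ n) G 0 / fact n"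
    by (rule fps_nth_fps_expansion)
  also have "(deriv ^^ n) G 0 = (deriv ^^ n) (\<lambda>_. 0) 0"
  proof (rule higher_deriv_cong_ev [OF _ refl])
    have "eventually (\<lambda>t. t \<in> ball 0 (1/2)) (nhds (0 :: complex))"
      by (intro eventually_nhds_in_open) auto
    thus "eventually (\<lambda>t. G t = 0) (nhds 0)"
      by eventually_elim (simp add: G_def gen_closed_ode)
  qed
  finally show ?thesis
    by (cases n) (simp_all add: A_def algebra_simps)
qed

lemma fps_expansion_gen_closed: "fps_expansion (gen_closed x) 0 $ n = theta_Delta n x / fact n"
proof (induction n arbitrary: x)
  case 0
  show ?case
    using fps_nth_fps_expansion[OF gen_closed_has_fps_expansion, of x 0]
    by (simp add: gen_closed_0 theta_Delta_def falling_fact_def)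
next
  case (Suc n)
  have "of_nat (Suc n) * fps_expansion (gen_closed x) 0 $ Suc n
      = (2 * of_nat n - x + 1) * (theta_Delta n x / fact n) + 2 * x * (theta_Delta n (x - 1) / fact n)"
    using fps_expansion_gen_closed_Suc[of n x] Suc.IH by simp
  also have "\<dots> = theta_Delta (Suc n) x / fact n"
    by (simp add: theta_Delta_Suc field_simps)
  finally show ?case by (simp add: field_simps del: of_nat_Suc)
qed

lemma gen_closed_sums:
  assumes "norm t < 1/2"
  shows "(\<lambda>n. theta_Delta n x * t ^ n / fact n) sums gen_closed x t"
proof -
  have "(\<lambda>n. (deriv ^^ n) (gen_closed x) 0 / fact n * (t - 0) ^ n) sums gen_closed x t"
    by (rule holomorphic_power_series [OF gen_closed_holomorphic]) (use assms in simp)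
  thus ?thesis
    using fps_nth_fps_expansion [OF gen_closed_has_fps_expansion]
    by (simp add: fps_expansion_gen_closed)
qed

lemma gen_f_eq_gen_closed: "norm t < 1/2 \<Longrightarrow> gen_f x t = gen_closed x t"
  unfolding gen_f_def using gen_closed_sums by (rule sums_unique [symmetric])

lemma deriv_gen_f:
  assumes "norm t < 1/2"
  shows "deriv (gen_f x) t = deriv (gen_closed x) t"
proof (rule deriv_cong_ev [OF _ refl])
  have "eventually (\<lambda>u. u \<in> ball 0 (1/2)) (nhds t)"
    using assms by (intro eventually_nhds_in_open) auto
  thus "eventually (\<lambda>u. gen_f x u = gen_closed x u) (nhds t)"
    by eventually_elim (simp add: gen_f_eq_gen_closed)
qed

section \<open>Uniform convergence\<close>

lemma norm_Ln_gen_base_le: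
  assumes t: "norm t < 1/2"
  shows "norm (Ln (gen_base t)) \<le> 3"
proof -
  define c where "c = gen_base t"
  have "norm (1 - 2 * t) \<le> 1 + norm (2 * t)" by (metis norm_one norm_triangle_ineq4)
  hence "norm (gen_root t) < sqrt (9 / 4)"
    using t by (simp add: gen_root_def)
  moreover have "sqrt (9 / 4) = 3 / 2" by (rule real_sqrt_unique) (auto simp: power2_eq_square)
  ultimately have "1/2 < Re c"
    using complex_Re_le_cmod[of "gen_root t"] by (simp add: c_def gen_base_def)
  hence lo: "1/2 < norm c" using complex_Re_le_cmod[of c] by linarith
  have "norm c \<le> norm (c - 1) + 1" by (metis norm_one norm_triangle_ineq diff_add_cancel)
  hence hi: "norm c < 2" using norm_gen_base_minus_one[OF t] by (simp add: c_def)
  have "ln (1/2) < ln (norm c)"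
    using lo by (intro ln_less_cancel_iff [THEN iffD2]) auto
  moreover have "ln (norm c) < ln 2"
    using lo hi by (intro ln_less_cancel_iff [THEN iffD2]) auto
  moreover have "ln (1/2 :: real) = - ln 2" by (simp add: ln_div)
  moreover have "Re (Ln c) = ln (norm c)" using gen_base_nonzero[OF t] by (simp add: c_def)
  ultimately have "\<bar>Re (Ln c)\<bar> < 1" using ln_2_less_1 by linarith
  moreover have "\<bar>Im (Ln c)\<bar> < pi / 2"
    using Re_gen_base_pos[OF t] by (intro Re_Ln_pos_lt_imp) (simp add: c_def)
  ultimately show ?thesis
    using cmod_le[of "Ln c"] pi_less_4 by (simp add: c_def)
qed

lemma norm_gen_closed_le:
  assumes t: "norm t < 1/2"
  shows "norm (gen_closed x t) \<le> exp (3 * norm x) / sqrt (1 - 2 * norm t)"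
proof -
  have "norm (exp (x * Ln (gen_base t))) = exp (Re (x * Ln (gen_base t)))" by simp
  also have "\<dots> \<le> exp (norm (x * Ln (gen_base t)))"
    by (subst exp_le_cancel_iff) (rule complex_Re_le_cmod)
  also have "\<dots> \<le> exp (3 * norm x)"
    using norm_Ln_gen_base_le[OF t] by (simp add: norm_mult mult.commute mult_left_mono)
  finally have num: "norm (exp (x * Ln (gen_base t))) \<le> exp (3 * norm x)" .
  have "1 - 2 * norm t \<le> norm (1 - 2 * t)"
    using norm_triangle_ineq2[of 1 "2 * t"] by simp
  hence den: "sqrt (1 - 2 * norm t) \<le> norm (gen_root t)"
    by (simp add: gen_root_def)
  show ?thesis
    unfolding gen_closed_def norm_divide using num den t by (intro frac_le) auto
qed

lemma norm_theta_Delta_le: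
  assumes "0 < \<rho>" "\<rho> < 1/2"
  shows "norm (theta_Delta n x / fact n) \<le> exp (3 * norm x) / sqrt (1 - 2 * \<rho>) / \<rho> ^ n"
proof -
  have "norm ((deriv ^^ n) (gen_closed x) 0) \<le> fact n * (exp (3 * norm x) / sqrt (1 - 2 * \<rho>)) / \<rho> ^ n"
  proof (rule Cauchy_inequality)
    show "gen_closed x holomorphic_on ball 0 \<rho>"
      using gen_closed_holomorphic by (rule holomorphic_on_subset) (use assms in auto)
    show "continuous_on (cball 0 \<rho>) (gen_closed x)"
      using holomorphic_on_imp_continuous_on [OF gen_closed_holomorphic]
      by (rule continuous_on_subset) (use assms in auto)
    show "norm (gen_closed x t) \<le> exp (3 * norm x) / sqrt (1 - 2 * \<rho>)" if "norm (0 - t) = \<rho>" for t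
      using norm_gen_closed_le[of t x] that assms by simp
  qed (use assms in auto)
  moreover have "(deriv ^^ n) (gen_closed x) 0 / fact n = theta_Delta n x / fact n"
    using fps_nth_fps_expansion [OF gen_closed_has_fps_expansion, of x n]
    by (simp add: fps_expansion_gen_closed)
  ultimately show ?thesis by (simp add: norm_divide field_simps)
qed

lemma compact_snd_norm_bound:
  assumes "compact K" "K \<subseteq> UNIV \<times> ball 0 (1/2)"
  obtains r where "0 \<le> r" "r < 1/2" "\<And>p. p \<in> K \<Longrightarrow> norm (snd p) \<le> r"
proof (cases "K = {}")
  case True
  thus ?thesis using that[of 0] by simp
next
  case False
  have "compact ((\<lambda>p. norm (snd p)) ` K)"
    by (intro compact_continuous_image continuous_intros assms(1))
  then obtain p where "p \<in> K" "\<And>q. q \<in> K \<Longrightarrow> norm (snd q) \<le> norm (snd p)"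
    using compact_attains_sup[of "(\<lambda>p. norm (snd p)) ` K"] False by auto
  moreover have "norm (snd p) < 1/2"
    using \<open>p \<in> K\<close> assms(2) by (auto simp: mem_Times_iff)
  ultimately show ?thesis using that[of "norm (snd p)"] by auto
qed

lemma uniform_limit_theta_Delta_series:
  assumes K: "compact K" "K \<subseteq> UNIV \<times> ball 0 (1/2)"
  shows "uniform_limit K (\<lambda>N (x, t). \<Sum>n<N. theta_Delta n x * t ^ n / fact n)
                          (\<lambda>(x, t). gen_f x t) sequentially"
proof -
  obtain X where X: "\<forall>x\<in>fst ` K. norm x \<le> X"
    using bounded_fst[OF compact_imp_bounded[OF K(1)]] unfolding bounded_iff by blast
  obtain r where r: "0 \<le> r" "r < 1/2" "\<And>p. p \<in> K \<Longrightarrow> norm (snd p) \<le> r"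
    using compact_snd_norm_bound[OF K] by blast
  define \<rho> where "\<rho> = (r + 1/2) / 2"
  have \<rho>: "0 < \<rho>" "\<rho> < 1/2" "r < \<rho>" using r by (auto simp: \<rho>_def)
  define f where "f n p = theta_Delta n (fst p) * snd p ^ n / fact n" for n and p :: "complex \<times> complex"
  define M where "M n = exp (3 * X) / sqrt (1 - 2 * \<rho>) * (r / \<rho>) ^ n" for n
  have "uniform_limit K (\<lambda>n p. \<Sum>i<n. f i p) (\<lambda>p. \<Sum>i. f i p) sequentially"
  proof (rule Weierstrass_m_test)
    fix n p assume p: "p \<in> K"
    have "norm (f n p) = norm (theta_Delta n (fst p) / fact n) * norm (snd p) ^ n"
      by (simp add: f_def norm_mult norm_divide norm_power)
    also have "\<dots> \<le> (exp (3 * norm (fst p)) / sqrt (1 - 2 * \<rho>) / \<rho> ^ n) * r ^ n"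
      using p r \<rho> by (intro mult_mono norm_theta_Delta_le power_mono) auto
    also have "\<dots> \<le> (exp (3 * X) / sqrt (1 - 2 * \<rho>) / \<rho> ^ n) * r ^ n"
      using p X \<rho> r by (intro mult_right_mono divide_right_mono) auto
    also have "\<dots> = M n" by (simp add: M_def power_divide)
    finally show "norm (f n p) \<le> M n" .
  next
    show "summable M"
      unfolding M_def using \<rho> r by (intro summable_mult summable_geometric) auto
  qed
  moreover have "(\<lambda>n p. \<Sum>i<n. f i p) = (\<lambda>N (x, t). \<Sum>n<N. theta_Delta n x * t ^ n / fact n)"
    by (auto simp: fun_eq_iff f_def)
  moreover have "(\<lambda>p. \<Sum>i. f i p) = (\<lambda>(x, t). gen_f x t)"
    by (auto simp: fun_eq_iff f_def gen_f_def)
  ultimately show ?thesis by simp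
qed

lemma powr_mult_exp_neg_tendsto_0:
  fixes a p :: real
  assumes "0 < a"
  shows "((\<lambda>R. R powr p * exp (- a * R)) \<longlongrightarrow> 0) at_top"
    and "((\<lambda>R. (R + 1) powr p * exp (- a * R)) \<longlongrightarrow> 0) at_top"
  using assms by real_asymp+

lemma Ln_of_real_mult:
  assumes "0 < r" "z \<noteq> 0"
  shows "Ln (of_real r * z) = of_real (ln r) + Ln z"
proof -
  have "of_real r * z = exp (of_real (ln r) + Ln z)"
    using assms by (simp add: exp_add exp_of_real)
  moreover have "Ln (exp (of_real (ln r) + Ln z)) = of_real (ln r) + Ln z"
    using assms mpi_less_Im_Ln[of z] Im_Ln_le_pi[of z] by (intro Ln_exp) auto
  ultimately show ?thesis by simp
qed

lemma powr_of_real_mult: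
  fixes z a :: complex
  assumes "0 < r"
  shows "(of_real r * z) powr a = exp (a * of_real (ln r)) * z powr a"
proof (cases "z = 0")
  case False
  thus ?thesis
    using assms by (simp add: powr_def Ln_of_real_mult exp_add distrib_left)
qed simp

lemma norm_powr_le: "norm (z powr a) \<le> norm z powr Re a * exp (\<bar>Im a\<bar> * pi)"
proof -
  have "\<bar>Arg z\<bar> \<le> pi" using mpi_less_Arg[of z] Arg_le_pi[of z] by linarith
  hence "\<bar>Im a\<bar> * \<bar>Arg z\<bar> \<le> \<bar>Im a\<bar> * pi" by (intro mult_left_mono) auto
  moreover have "- Im a * Arg z \<le> \<bar>Im a\<bar> * \<bar>Arg z\<bar>"
    using abs_ge_self[of "- Im a * Arg z"] by (simp add: abs_mult)
  ultimately have "exp (- Im a * Arg z) \<le> exp (\<bar>Im a\<bar> * pi)" by simp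
  hence "norm z powr Re a * exp (- Im a * Arg z) \<le> norm z powr Re a * exp (\<bar>Im a\<bar> * pi)"
    by (intro mult_left_mono) auto
  thus ?thesis by (simp add: norm_powr_complex)
qed

text \<open>Continuity at \<open>z = 0\<close> rests on \<open>0 powr a = 0\<close> together with \<open>Re a > 0\<close>.\<close>

lemma continuous_on_powr_linear:
  fixes k a :: complex
  assumes "0 < Re a" "\<And>z. z \<in> S \<Longrightarrow> k * z \<notin> \<real>\<^sub>\<le>\<^sub>0 \<or> z = 0"
  shows "continuous_on S (\<lambda>z. (k * z) powr a)"
  unfolding continuous_on_def
proof
  fix x assume "x \<in> S"
  hence "k * x \<notin> \<real>\<^sub>\<le>\<^sub>0 \<or> (k * x = 0 \<and> 0 < Re a)" using assms by auto
  thus "((\<lambda>z. (k * z) powr a) \<longlongrightarrow> (k * x) powr a) (at x within S)"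
    by (intro tendsto_powr_complex' tendsto_intros) auto
qed

lemma interior_halfplanes:
  "interior {z. Re z \<le> b} = {z. Re z < b}"
  "interior {z. Im z \<le> b} = {z. Im z < b}"
  "interior {z. b \<le> Im z} = {z. b < Im z}"
  using interior_halfspace_le[of "1 :: complex" b] interior_halfspace_le[of \<i> b] interior_halfspace_ge[of \<i> b]
  by (simp_all add: inner_complex_def)

lemma
  assumes "convex S" "continuous_on S f" "f holomorphic_on interior S"
  shows contour_integral_triangle_convex:
      "\<lbrakk>a \<in> S; b \<in> S; c \<in> S\<rbrakk> \<Longrightarrow>
        contour_integral (linepath a b) f + contour_integral (linepath b c) f
          + contour_integral (linepath c a) f = 0"
    and contour_integral_pentagon_convex:
      "\<lbrakk>a \<in> S; b \<in> S; c \<in> S; d \<in> S; e \<in> S\<rbrakk> \<Longrightarrow>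
        contour_integral (linepath a b) f + contour_integral (linepath b c) f
          + contour_integral (linepath c d) f + contour_integral (linepath d e) f
          + contour_integral (linepath e a) f = 0"
proof -
  have seg: "closed_segment u v \<subseteq> S" if "u \<in> S" "v \<in> S" for u v
    using assms(1) that by (intro closed_segment_subset)
  have int: "f contour_integrable_on linepath u v" if "u \<in> S" "v \<in> S" for u v
    using continuous_on_subset[OF assms(2) seg[OF that]] by (rule contour_integrable_continuous_linepath)
  have cauchy: "(f has_contour_integral 0) g"
    if "valid_path g" "path_image g \<subseteq> S" "pathfinish g = pathstart g" for g
    using assms that
    by (intro Cauchy_theorem_convex[where K = "{}"])
       (auto intro: holomorphic_on_imp_differentiable_at simp: interior_open)
  show "contour_integral (linepath a b) f + contour_integral (linepath b c) f
          + contour_integral (linepath c a) f = 0" if "a \<in> S" "b \<in> S" "c \<in> S"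
  proof -
    have "contour_integral (linepath a b +++ linepath b c +++ linepath c a) f = 0"
      using that seg by (intro contour_integral_unique cauchy) (auto simp: path_image_join)
    thus ?thesis using that int by (simp add: contour_integrable_joinI add.assoc)
  qed
  show "contour_integral (linepath a b) f + contour_integral (linepath b c) f
          + contour_integral (linepath c d) f + contour_integral (linepath d e) f
          + contour_integral (linepath e a) f = 0" if "a \<in> S" "b \<in> S" "c \<in> S" "d \<in> S" "e \<in> S"
  proof -
    have "contour_integral
            (linepath a b +++ linepath b c +++ linepath c d +++ linepath d e +++ linepath e a) f = 0"
      using that seg by (intro contour_integral_unique cauchy) (auto simp: path_image_join)
    thus ?thesis using that int by (simp add: contour_integrable_joinI add.assoc)
  qed
qed

lemma closed_segment_Re_Im:
  assumes "z \<in> closed_segment u v"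
  obtains s where "0 \<le> s" "s \<le> 1" "Re z = (1 - s) * Re u + s * Re v" "Im z = (1 - s) * Im u + s * Im v"
proof -
  from assms obtain s where "0 \<le> s" "s \<le> 1" and "z = (1 - s) *\<^sub>R u + s *\<^sub>R v"
    unfolding closed_segment_def by blast
  thus ?thesis using that by simp
qed

lemma closed_segment_Im_const: "z \<in> closed_segment u v \<Longrightarrow> Im u = y \<Longrightarrow> Im v = y \<Longrightarrow> Im z = y"
  by (erule closed_segment_Re_Im) (simp add: algebra_simps)

lemma closed_segment_Re_const: "z \<in> closed_segment u v \<Longrightarrow> Re u = y \<Longrightarrow> Re v = y \<Longrightarrow> Re z = y"
  by (erule closed_segment_Re_Im) (simp add: algebra_simps)

lemma closed_segment_Im_between:
  assumes "z \<in> closed_segment u v" "Im u \<le> Im v"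
  shows "Im u \<le> Im z" "Im z \<le> Im v"
proof -
  obtain s where s: "0 \<le> s" "s \<le> 1" "Im z = Im u + s * (Im v - Im u)"
    using assms(1) by (rule closed_segment_Re_Im) (simp add: algebra_simps)
  moreover have "s * (Im v - Im u) \<le> 1 * (Im v - Im u)"
    using s assms(2) by (intro mult_right_mono) auto
  ultimately show "Im u \<le> Im z" "Im z \<le> Im v" using assms(2) by simp_all
qed

lemma norm_exp_mult_powr_vertical_le:
  fixes k K c a z :: complex
  assumes "norm k = 1" "Re a > 0" "R > 0" "Re z = - R" "\<bar>Im z\<bar> \<le> 1"
  shows "norm (exp (c * z) * (k * z) powr a * K)
         \<le> exp (\<bar>Im c\<bar>) * exp (\<bar>Im a\<bar> * pi) * norm K * ((R + 1) powr Re a * exp (- Re c * R))"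
proof -
  have "Re (c * z) = - Re c * R - Im c * Im z" using assms by simp
  also have "\<dots> \<le> - Re c * R + \<bar>Im c\<bar>"
  proof -
    have "\<bar>Im c * Im z\<bar> \<le> \<bar>Im c\<bar> * 1" unfolding abs_mult using assms by (intro mult_left_mono) auto
    thus ?thesis by linarith
  qed
  finally have e1: "norm (exp (c * z)) \<le> exp (\<bar>Im c\<bar>) * exp (- Re c * R)" by (simp add: exp_add[symmetric] add.commute)
  have "norm z \<le> \<bar>Re z\<bar> + \<bar>Im z\<bar>" by (rule cmod_le)
  hence nz: "norm (k * z) \<le> R + 1" using assms by (simp add: norm_mult)
  have "norm ((k * z) powr a) \<le> norm (k * z) powr Re a * exp (\<bar>Im a\<bar> * pi)" by (rule norm_powr_le)
  also have "\<dots> \<le> (R + 1) powr Re a * exp (\<bar>Im a\<bar> * pi)"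
    using nz assms by (intro mult_right_mono powr_mono2) auto
  finally have e2: "norm ((k * z) powr a) \<le> (R + 1) powr Re a * exp (\<bar>Im a\<bar> * pi)" .
  have "norm (exp (c * z) * (k * z) powr a * K) = norm (exp (c * z)) * norm ((k * z) powr a) * norm K"
    by (simp add: norm_mult)
  also have "\<dots> \<le> (exp (\<bar>Im c\<bar>) * exp (- Re c * R)) * ((R + 1) powr Re a * exp (\<bar>Im a\<bar> * pi)) * norm K"
    using e1 e2 by (intro mult_right_mono mult_mono) auto
  also have "\<dots> = exp (\<bar>Im c\<bar>) * exp (\<bar>Im a\<bar> * pi) * norm K * ((R + 1) powr Re a * exp (- Re c * R))"
    by (simp add: algebra_simps)
  finally show ?thesis .
qed

lemma closed_segment_vertical:
  assumes "z \<in> closed_segment (- of_real R + \<i> * of_real y1) (- of_real R + \<i> * of_real y2)"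
    and "\<bar>y1\<bar> \<le> 1" "\<bar>y2\<bar> \<le> 1"
  shows "Re z = - R" "\<bar>Im z\<bar> \<le> 1"
proof -
  obtain u where u: "0 \<le> u" "u \<le> 1" and re: "Re z = (1 - u) * (- R) + u * (- R)"
    and im: "Im z = (1 - u) * y1 + u * y2"
    using assms(1) by (rule closed_segment_Re_Im) simp
  show "Re z = - R" using re by (simp add: algebra_simps)
  have "\<bar>Im z\<bar> \<le> (1 - u) * \<bar>y1\<bar> + u * \<bar>y2\<bar>" unfolding im using u
    by (metis abs_mult abs_of_nonneg abs_triangle_ineq diff_ge_0_iff_ge)
  also have "\<dots> \<le> (1 - u) * 1 + u * 1" using u assms by (intro add_mono mult_left_mono) auto
  finally show "\<bar>Im z\<bar> \<le> 1" by simp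
qed

lemma vertical_segment_integral_tendsto_0:
  fixes k K c a :: complex
  assumes "norm k = 1" "Re c > 0" "Re a > 0" "\<bar>y1\<bar> \<le> 1" "\<bar>y2\<bar> \<le> 1" "\<bar>y2 - y1\<bar> \<le> 1"
    and cont: "\<And>R. R > 0 \<Longrightarrow> continuous_on (closed_segment (- of_real R + \<i> * of_real y1) (- of_real R + \<i> * of_real y2))
                   (\<lambda>z. exp (c * z) * (k * z) powr a * K)"
  shows "((\<lambda>R. contour_integral (linepath (- of_real R + \<i> * of_real y1) (- of_real R + \<i> * of_real y2))
              (\<lambda>z. exp (c * z) * (k * z) powr a * K)) \<longlongrightarrow> 0) at_top"
proof (rule Lim_null_comparison)
  define M where "M = exp (\<bar>Im c\<bar>) * exp (\<bar>Im a\<bar> * pi) * norm K"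
  show "((\<lambda>R. M * ((R + 1) powr Re a * exp (- Re c * R))) \<longlongrightarrow> 0) at_top"
    using tendsto_mult_left[OF powr_mult_exp_neg_tendsto_0(2)[OF assms(2), of "Re a"], of M] by simp
  show "eventually (\<lambda>R. norm (contour_integral (linepath (- of_real R + \<i> * of_real y1) (- of_real R + \<i> * of_real y2))
              (\<lambda>z. exp (c * z) * (k * z) powr a * K)) \<le> M * ((R + 1) powr Re a * exp (- Re c * R))) at_top"
    using eventually_gt_at_top[of 0]
  proof eventually_elim
    case (elim R)
    have int: "(\<lambda>z. exp (c * z) * (k * z) powr a * K) contour_integrable_on
               linepath (- of_real R + \<i> * of_real y1) (- of_real R + \<i> * of_real y2)"
      by (rule contour_integrable_continuous_linepath[OF cont[OF elim]])
    have M0: "0 \<le> M * ((R + 1) powr Re a * exp (- Re c * R))" by (simp add: M_def)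
    have "norm (contour_integral (linepath (- of_real R + \<i> * of_real y1) (- of_real R + \<i> * of_real y2))
              (\<lambda>z. exp (c * z) * (k * z) powr a * K))
          \<le> M * ((R + 1) powr Re a * exp (- Re c * R)) * norm ((- of_real R + \<i> * of_real y2) - (- of_real R + \<i> * of_real y1))"
    proof (rule has_contour_integral_bound_linepath[OF has_contour_integral_integral[OF int] M0])
      fix z assume "z \<in> closed_segment (- of_real R + \<i> * of_real y1) (- of_real R + \<i> * of_real y2)"
      hence "Re z = - R" "\<bar>Im z\<bar> \<le> 1"
        using closed_segment_vertical assms(4,5) by blast+
      thus "norm (exp (c * z) * (k * z) powr a * K) \<le> M * ((R + 1) powr Re a * exp (- Re c * R))"
        unfolding M_def using norm_exp_mult_powr_vertical_le[OF assms(1,3) elim] by blast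
    qed
    also have "norm ((- of_real R + \<i> * of_real y2) - (- of_real R + \<i> * of_real y1)) = \<bar>y2 - y1\<bar>"
      by (simp add: norm_mult flip: of_real_diff right_diff_distrib)
    also have "M * ((R + 1) powr Re a * exp (- Re c * R)) * \<bar>y2 - y1\<bar> \<le> M * ((R + 1) powr Re a * exp (- Re c * R)) * 1"
      using assms M0 by (intro mult_left_mono) auto
    finally show ?case by simp
  qed
qed

section \<open>Euler's integral along a rotated ray\<close>

lemma Gamma_linepath_tendsto:
  assumes w: "0 < Re w"
  shows "((\<lambda>b. contour_integral (linepath 0 (of_real b)) (\<lambda>v. v powr (w - 1) / exp v))
           \<longlongrightarrow> Gamma w) at_top"
proof -
  define f :: "real \<Rightarrow> complex" where "f t = of_real t powr (w - 1) / of_real (exp t)" for t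
  have "f absolutely_integrable_on {0<..}"
    unfolding f_def by (rule absolutely_integrable_Gamma_integral'[OF w])
  hence ai: "f absolutely_integrable_on {0..}"
    by (rule absolutely_integrable_spike_set) (auto intro: negligible_subset[of "{0}"])
  have "((\<lambda>b. LINT t:{0..b}|lebesgue. f t) \<longlongrightarrow> (LINT t:{0..}|lebesgue. f t)) at_top"
    by (rule tendsto_set_lebesgue_integral_at_top) (use ai in auto)
  also have "(LINT t:{0..}|lebesgue. f t) = integral {0..} f"
    by (rule set_lebesgue_integral_eq_integral(2)[OF ai])
  also have "\<dots> = Gamma w"
    unfolding f_def by (rule integral_unique[OF Gamma_integral_complex[OF w]])
  finally show ?thesis
  proof (rule Lim_transform_eventually)
    show "eventually (\<lambda>b. (LINT t:{0..b}|lebesgue. f t)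
            = contour_integral (linepath 0 (of_real b)) (\<lambda>v. v powr (w - 1) / exp v)) at_top"
      using eventually_gt_at_top[of 0]
    proof eventually_elim
      case (elim b)
      have "f absolutely_integrable_on {0..b}"
        by (rule set_integrable_subset[OF ai]) auto
      hence "(LINT t:{0..b}|lebesgue. f t) = integral {0..b} f"
        by (rule set_lebesgue_integral_eq_integral(2))
      also have "\<dots> = contour_integral (linepath 0 (of_real b)) (\<lambda>v. v powr (w - 1) / exp v)"
        using elim by (subst contour_integral_linepath_Reals_eq) (auto simp: f_def [abs_def] exp_of_real)
      finally show ?case .
    qed
  qed
qed

lemma Re_minus_of_real_divide_neg:
  assumes "0 < b" "0 < Re c"
  shows "Re (- of_real b / c) < 0"
proof -
  have "0 < (Re c)\<^sup>2 + (Im c)\<^sup>2" using assms(2) by (simp add: add_pos_nonneg)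
  thus ?thesis using assms by (simp add: Re_divide divide_neg_pos)
qed

lemma continuous_on_ray_integrand:
  "0 < Re a \<Longrightarrow> continuous_on {z. Re z \<le> 0} (\<lambda>z. exp (c * z) * (- z) powr a)"
  using continuous_on_powr_linear[of a "{z. Re z \<le> 0}" "- 1"]
  by (auto intro!: continuous_intros simp: complex_nonpos_Reals_iff complex_eq_iff)

lemma holomorphic_on_ray_integrand:
  "(\<lambda>z. exp (c * z) * (- z) powr a) holomorphic_on {z. Re z < 0}"
  by (intro holomorphic_intros) (auto simp: complex_nonpos_Reals_iff)

lemma ray_integrand_rotation:
  fixes c w :: complex
  assumes c: "0 < Re c" and v: "0 < v"
  shows "exp (c * (- of_real v / c)) * (- (- of_real v / c)) powr (w - 1) * (- 1 / c)
         = - exp (- w * Ln c) * (of_real v powr (w - 1) / exp (of_real v))"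
proof -
  have c0: "c \<noteq> 0" using c by auto
  have "inverse c powr (w - 1) = exp (- (w - 1) * Ln c)"
    using c0 c by (simp add: powr_def Ln_inverse complex_nonpos_Reals_iff algebra_simps)
  hence "(of_real v * inverse c) powr (w - 1) = exp ((w - 1) * of_real (ln v)) * exp (- (w - 1) * Ln c)"
    by (simp only: powr_of_real_mult[OF v])
  moreover have "of_real v powr (w - 1) = exp ((w - 1) * of_real (ln v))"
    using v by (simp add: powr_def Ln_of_real[OF v] del: of_real_mult)
  moreover have "- (- of_real v / c) = of_real v * inverse c"
    by (simp add: field_simps)
  moreover have "exp (- w * Ln c) = exp (- (w - 1) * Ln c) * exp (- Ln c)"
    by (simp add: algebra_simps flip: exp_add)
  moreover have "inverse c = exp (- Ln c)"
    using c0 by (simp add: exp_minus)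
  ultimately show ?thesis
    using c0 by (simp add: field_simps exp_minus)
qed

text \<open>The substitution \<open>z = - v / c\<close> turns the segment from \<open>- b / c\<close> to \<open>0\<close> into the real
  segment from \<open>0\<close> to \<open>b\<close>.\<close>

lemma contour_integral_rotated_segment:
  fixes c w :: complex
  assumes c: "0 < Re c" and w: "1 < Re w" and b: "0 < b"
  shows "contour_integral (linepath (- of_real b / c) 0) (\<lambda>z. exp (c * z) * (- z) powr (w - 1))
         = exp (- w * Ln c) * contour_integral (linepath 0 (of_real b)) (\<lambda>v. v powr (w - 1) / exp v)"
proof -
  define q where "q z = exp (c * z) * (- z) powr (w - 1)" for z
  define g where "g v = v powr (w - 1) / exp v" for v :: complex
  define e where "e = exp (- w * Ln c)"
  define J where "J = contour_integral (linepath 0 (of_real b)) g"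
  have "continuous_on {z. 0 \<le> Re z} (\<lambda>z. (1 * z) powr (w - 1))"
    using w by (intro continuous_on_powr_linear) (auto simp: complex_nonpos_Reals_iff complex_eq_iff)
  hence "continuous_on {z. 0 \<le> Re z} g"
    unfolding g_def by (auto intro!: continuous_intros)
  moreover have "closed_segment 0 (of_real b) \<subseteq> {z. 0 \<le> Re z}"
    using b by (intro closed_segment_subset) (auto simp: convex_halfspace_Re_ge)
  ultimately have "(g has_contour_integral J) (linepath 0 (of_real b))"
    unfolding J_def
    by (intro has_contour_integral_integral contour_integrable_continuous_linepath)
       (rule continuous_on_subset)
  hence "((\<lambda>u. - e * (g (linepath 0 (of_real b) u) * of_real b)) has_integral (- e * J)) {0..1}"
    by (intro has_integral_mult_right) (simp add: has_contour_integral_linepath)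
  hence "((\<lambda>u. q (linepath 0 (- of_real b / c) u) * (- of_real b / c)) has_integral (- e * J)) {0..1}"
  proof (rule has_integral_eq [rotated])
    fix u :: real assume u: "u \<in> {0..1}"
    show "- e * (g (linepath 0 (of_real b) u) * of_real b)
        = q (linepath 0 (- of_real b / c) u) * (- of_real b / c)"
    proof (cases "u = 0")
      case False
      hence "0 < u * b" using u b by simp
      have lin: "linepath 0 (of_real b) u = of_real (u * b)"
          "linepath 0 (- of_real b / c) u = - of_real (u * b) / c"
        by (simp_all add: linepath_def scaleR_conv_of_real)
      have "q (- of_real (u * b) / c) * (- of_real b / c)
          = of_real b * (q (- of_real (u * b) / c) * (- 1 / c))"
        by simp
      also have "\<dots> = of_real b * (- e * g (of_real (u * b)))"
        using ray_integrand_rotation[OF c \<open>0 < u * b\<close>, of w] by (simp add: q_def g_def e_def)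
      finally show ?thesis
        unfolding lin by (simp add: mult_ac)
    qed (simp add: q_def g_def linepath_def)
  qed
  hence "(q has_contour_integral (- e * J)) (linepath 0 (- of_real b / c))"
    by (simp add: has_contour_integral_linepath)
  hence "(q has_contour_integral (e * J)) (linepath (- of_real b / c) 0)"
    using has_contour_integral_reverse_linepath by fastforce
  thus ?thesis
    unfolding q_def e_def J_def g_def by (rule contour_integral_unique)
qed

lemma norm_ray_integrand_on_chord_le:
  fixes c a :: complex
  assumes c: "0 < Re c" and a: "0 < Re a" and R: "0 < R"
    and z: "z \<in> closed_segment (- of_real R) (- of_real (R * norm c) / c)"
  shows "norm (exp (c * z) * (- z) powr a) \<le> exp (- R * Re c) * (R powr Re a * exp (\<bar>Im a\<bar> * pi))"
proof -
  define P where "P = - of_real (R * norm c) / c"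
  have c0: "c \<noteq> 0" using c by auto
  from z obtain u where u: "0 \<le> u" "u \<le> 1" and zu: "z = (1 - u) *\<^sub>R (- of_real R) + u *\<^sub>R P"
    unfolding closed_segment_def P_def by blast
  have "c * z = - of_real ((1 - u) * R) * c + of_real u * (c * P)"
    unfolding zu by (simp add: scaleR_conv_of_real algebra_simps)
  hence "Re (c * z) = - ((1 - u) * R) * Re c - u * (R * norm c)"
    using c0 by (simp add: P_def)
  also have "\<dots> \<le> - ((1 - u) * R) * Re c - u * (R * Re c)"
    using u R complex_Re_le_cmod[of c] by (intro diff_mono) (auto intro!: mult_left_mono)
  also have "\<dots> = - R * Re c" by (simp add: algebra_simps)
  finally have exp_le: "norm (exp (c * z)) \<le> exp (- R * Re c)" by simp
  have "norm z \<le> norm ((1 - u) *\<^sub>R (- of_real R :: complex)) + norm (u *\<^sub>R P)"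
    unfolding zu by (rule norm_triangle_ineq)
  also have "\<dots> = (1 - u) * R + u * R" using u R c0 by (simp add: P_def norm_divide norm_mult)
  finally have "norm z \<le> R" by (simp add: algebra_simps)
  have "norm ((- z) powr a) \<le> norm (- z) powr Re a * exp (\<bar>Im a\<bar> * pi)"
    by (rule norm_powr_le)
  also have "\<dots> \<le> R powr Re a * exp (\<bar>Im a\<bar> * pi)"
    using \<open>norm z \<le> R\<close> a by (intro mult_right_mono powr_mono2) auto
  finally show ?thesis
    unfolding norm_mult using exp_le by (intro mult_mono) auto
qed

lemma norm_contour_integral_chord_le:
  fixes c a :: complex
  assumes c: "0 < Re c" and a: "0 < Re a" and R: "0 < R"
  shows "norm (contour_integral (linepath (- of_real R) (- of_real (R * norm c) / c))
                 (\<lambda>z. exp (c * z) * (- z) powr a))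
         \<le> 2 * exp (\<bar>Im a\<bar> * pi) * (R powr (Re a + 1) * exp (- Re c * R))"
proof -
  define P where "P = - of_real (R * norm c) / c"
  define M where "M = exp (- R * Re c) * (R powr Re a * exp (\<bar>Im a\<bar> * pi))"
  have c0: "c \<noteq> 0" using c by auto
  have nP: "norm P = R" using R c0 by (simp add: P_def norm_divide norm_mult)
  have "Re P < 0"
    unfolding P_def using R c c0 by (intro Re_minus_of_real_divide_neg) auto
  hence seg: "closed_segment (- of_real R) P \<subseteq> {z. Re z \<le> 0}"
    using R by (intro closed_segment_subset) (auto simp: convex_halfspace_Re_le)
  have "norm (contour_integral (linepath (- of_real R) P) (\<lambda>z. exp (c * z) * (- z) powr a))
        \<le> M * norm (P - (- of_real R))"
    using continuous_on_subset[OF continuous_on_ray_integrand[OF a] seg]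
      norm_ray_integrand_on_chord_le[OF c a R]
    by (intro has_contour_integral_bound_linepath[OF has_contour_integral_integral]
          contour_integrable_continuous_linepath) (auto simp: M_def P_def)
  also have "\<dots> \<le> M * (2 * R)"
    using norm_triangle_ineq[of P "of_real R"] nP R by (intro mult_left_mono) (auto simp: M_def)
  also have "\<dots> = 2 * exp (\<bar>Im a\<bar> * pi) * (R powr (Re a + 1) * exp (- Re c * R))"
    using R by (simp add: M_def powr_add algebra_simps)
  finally show ?thesis unfolding P_def .
qed

text \<open>Cauchy's theorem in the left half-plane moves the segment from \<open>- R\<close> to \<open>0\<close> onto the
  rotated segment from \<open>- R |c| / c\<close> to \<open>0\<close>, up to a chord of length at most \<open>2 R\<close>.\<close>

lemma ray_integral_split:
  fixes c w :: complex
  assumes c: "0 < Re c" and w: "1 < Re w" and R: "0 < R"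
  defines "q \<equiv> \<lambda>z. exp (c * z) * (- z) powr (w - 1)"
  shows "contour_integral (linepath (- of_real R) 0) q
       = contour_integral (linepath (- of_real R) (- of_real (R * norm c) / c)) q
         + exp (- w * Ln c) * contour_integral (linepath 0 (of_real (R * norm c))) (\<lambda>v. v powr (w - 1) / exp v)"
proof -
  define P where "P = - of_real (R * norm c) / c"
  have c0: "c \<noteq> 0" using c by auto
  have a: "0 < Re (w - 1)" using w by simp
  have "Re P < 0" unfolding P_def using R c c0 by (intro Re_minus_of_real_divide_neg) auto
  hence pts: "- of_real R \<in> {z. Re z \<le> 0}" "P \<in> {z. Re z \<le> 0}" "0 \<in> {z. Re z \<le> 0}"
    using R by auto
  have "contour_integral (linepath (- of_real R) P) q + contour_integral (linepath P 0) q
        + contour_integral (linepath 0 (- of_real R)) q = 0"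
    using continuous_on_ray_integrand[OF a] holomorphic_on_ray_integrand
    by (intro contour_integral_triangle_convex[OF convex_halfspace_Re_le _ _ pts])
       (simp_all add: q_def interior_halfplanes)
  moreover have "closed_segment (- of_real R) 0 \<subseteq> {z. Re z \<le> 0}"
    using pts by (intro closed_segment_subset) (auto simp: convex_halfspace_Re_le)
  hence "contour_integral (linepath (- of_real R) 0) q = - contour_integral (linepath 0 (- of_real R)) q"
    using continuous_on_ray_integrand[OF a] unfolding q_def
    by (intro contour_integral_reverse_linepath) (rule continuous_on_subset)
  moreover have "contour_integral (linepath P 0) q
      = exp (- w * Ln c) * contour_integral (linepath 0 (of_real (R * norm c))) (\<lambda>v. v powr (w - 1) / exp v)"
    unfolding P_def q_def using R c0 by (intro contour_integral_rotated_segment c w) auto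
  ultimately show ?thesis
    by (simp add: P_def add_eq_0_iff)
qed

lemma ray_integral_tendsto_Gamma:
  fixes c w :: complex
  assumes c: "0 < Re c" and w: "1 < Re w"
  shows "((\<lambda>R. contour_integral (linepath (- of_real R) 0) (\<lambda>z. exp (c * z) * (- z) powr (w - 1)))
           \<longlongrightarrow> exp (- w * Ln c) * Gamma w) at_top"
proof -
  define q where "q z = exp (c * z) * (- z) powr (w - 1)" for z
  define chord where "chord R = contour_integral (linepath (- of_real R) (- of_real (R * norm c) / c)) q"
    for R
  define J where "J b = contour_integral (linepath 0 (of_real b)) (\<lambda>v. v powr (w - 1) / exp v)" for b
  have c0: "c \<noteq> 0" using c by auto
  have a: "0 < Re (w - 1)" using w by simp
  have chord_lim: "(chord \<longlongrightarrow> 0) at_top"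
  proof (rule Lim_null_comparison)
    show "eventually (\<lambda>R. norm (chord R)
            \<le> 2 * exp (\<bar>Im (w - 1)\<bar> * pi) * (R powr (Re (w - 1) + 1) * exp (- Re c * R))) at_top"
      using eventually_gt_at_top[of 0]
      by eventually_elim (unfold chord_def q_def, intro norm_contour_integral_chord_le c a)
    show "((\<lambda>R. 2 * exp (\<bar>Im (w - 1)\<bar> * pi) * (R powr (Re (w - 1) + 1) * exp (- Re c * R))) \<longlongrightarrow> 0) at_top"
      using tendsto_mult_left[OF powr_mult_exp_neg_tendsto_0(1)[OF c, of "Re (w - 1) + 1"]] by simp
  qed
  have J_lim: "((\<lambda>R. J (R * norm c)) \<longlongrightarrow> Gamma w) at_top"
  proof (rule filterlim_compose[of J])
    show "(J \<longlongrightarrow> Gamma w) at_top"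
      unfolding J_def using w by (intro Gamma_linepath_tendsto) auto
    show "filterlim (\<lambda>R. R * norm c) at_top at_top"
      using c0 by (intro filterlim_at_top_mult_tendsto_pos[OF tendsto_const]) (auto simp: filterlim_ident)
  qed
  have "((\<lambda>R. chord R + exp (- w * Ln c) * J (R * norm c)) \<longlongrightarrow> 0 + exp (- w * Ln c) * Gamma w) at_top"
    by (intro tendsto_intros chord_lim J_lim)
  moreover have "eventually (\<lambda>R. chord R + exp (- w * Ln c) * J (R * norm c)
                   = contour_integral (linepath (- of_real R) 0) q) at_top"
    using eventually_gt_at_top[of 0]
    by eventually_elim (simp add: ray_integral_split[OF c w] chord_def J_def q_def [abs_def])
  ultimately have "((\<lambda>R. contour_integral (linepath (- of_real R) 0) q) \<longlongrightarrow> exp (- w * Ln c) * Gamma w) at_top"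
    by (simp add: Lim_transform_eventually)
  thus ?thesis unfolding q_def .
qed

section \<open>Branches of the Hankel kernel\<close>

lemma Ln_exp_ii_mult:
  assumes "z \<noteq> 0" "- pi < Im (Ln z) + \<theta>" "Im (Ln z) + \<theta> \<le> pi"
  shows "Ln (exp (\<i> * of_real \<theta>) * z) = Ln z + \<i> * of_real \<theta>"
proof -
  have "exp (\<i> * of_real \<theta>) * z = exp (Ln z + \<i> * of_real \<theta>)"
    using assms(1) by (simp add: exp_add)
  moreover have "Ln (exp (Ln z + \<i> * of_real \<theta>)) = Ln z + \<i> * of_real \<theta>"
    using assms by (intro Ln_exp) auto
  ultimately show ?thesis by simp
qed

lemma Im_Ln_nonpos:
  assumes "Im z \<le> 0" "z \<notin> \<real>\<^sub>\<le>\<^sub>0"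
  shows "Im (Ln z) \<le> 0"
proof (rule ccontr)
  assume pos: "\<not> Im (Ln z) \<le> 0"
  have z0: "z \<noteq> 0" using assms by auto
  have "Im (Ln z) \<noteq> pi" using Im_Ln_eq_pi[OF z0] assms by (auto simp: complex_nonpos_Reals_iff)
  hence "Im (Ln z) < pi" using Im_Ln_le_pi[of z] z0 by linarith
  hence "0 < Im z" using Im_Ln_pos_lt[OF z0] pos by auto
  thus False using assms by simp
qed

lemma Im_Ln_nonneg_less_pi:
  assumes "0 \<le> Im z" "z \<notin> \<real>\<^sub>\<le>\<^sub>0"
  shows "0 \<le> Im (Ln z)" "Im (Ln z) < pi"
proof -
  have z0: "z \<noteq> 0" using assms by auto
  show "0 \<le> Im (Ln z)" using Im_Ln_pos_le[OF z0] assms by auto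
  have "Im (Ln z) \<noteq> pi" using Im_Ln_eq_pi[OF z0] assms by (auto simp: complex_nonpos_Reals_iff)
  thus "Im (Ln z) < pi" using Im_Ln_le_pi[of z] z0 by linarith
qed

lemma powr_ii_mult_lower:
  assumes "Im z \<le> 0" "z \<notin> \<real>\<^sub>\<le>\<^sub>0"
  shows "(\<i> * z) powr a = exp (a * (Ln z + \<i> * of_real (pi / 2)))"
proof -
  have z0: "z \<noteq> 0" using assms by auto
  have ii: "\<i> = exp (\<i> * of_real (pi / 2))" by (simp add: exp_eq_polar cis_conv_exp [symmetric])
  have "Ln (\<i> * z) = Ln z + \<i> * of_real (pi / 2)"
    using Im_Ln_nonpos[OF assms] mpi_less_Im_Ln[of z] z0
    by (subst ii, intro Ln_exp_ii_mult) auto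
  thus ?thesis using z0 by (simp add: powr_def)
qed

lemma powr_minus_ii_mult_upper:
  assumes "0 \<le> Im z" "z \<notin> \<real>\<^sub>\<le>\<^sub>0"
  shows "(- \<i> * z) powr a = exp (a * (Ln z - \<i> * of_real (pi / 2)))"
proof -
  have z0: "z \<noteq> 0" using assms by auto
  have ii: "- \<i> = exp (\<i> * of_real (- pi / 2))" by (simp add: exp_eq_polar cis_conv_exp [symmetric])
  have "Ln (- \<i> * z) = Ln z + \<i> * of_real (- pi / 2)"
    using Im_Ln_nonneg_less_pi[OF assms] z0
    by (subst ii, intro Ln_exp_ii_mult) auto
  thus ?thesis using z0 by (simp add: powr_def)
qed

lemma powr_of_real_ii_mult:
  assumes "0 < r"
  shows "(of_real r * \<i>) powr a = exp (a * of_real (ln r)) * exp (a * (\<i> * of_real (pi / 2)))"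
    and "(of_real r * (- \<i>)) powr a = exp (a * of_real (ln r)) * exp (a * (- (\<i> * of_real (pi / 2))))"
    and "(of_real r :: complex) powr a = exp (a * of_real (ln r))"
proof -
  show "(of_real r * \<i>) powr a = exp (a * of_real (ln r)) * exp (a * (\<i> * of_real (pi / 2)))"
    by (simp only: powr_of_real_mult[OF assms]) (simp add: powr_def)
  show "(of_real r * (- \<i>)) powr a = exp (a * of_real (ln r)) * exp (a * (- (\<i> * of_real (pi / 2))))"
    by (simp only: powr_of_real_mult[OF assms]) (simp add: powr_def)
  show "(of_real r :: complex) powr a = exp (a * of_real (ln r))"
    using assms by (simp add: powr_def Ln_of_real)
qed

definition hankel_kernel :: "complex \<Rightarrow> complex \<Rightarrow> complex \<Rightarrow> complex" where
  "hankel_kernel c x z = exp (c * z) * hankel_pow x z"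

text \<open>For \<open>a = - x - 1\<close>, the kernel \<open>hankel_kernel c x\<close> restricted to the open lower (upper)
  half-plane, written so that it extends continuously to the closed half-plane when \<open>Re a > 0\<close>;
  the two extensions differ by the factor \<open>exp (- 2 \<pi> \<i> a)\<close> on the negative real axis.\<close>

definition lower_branch :: "complex \<Rightarrow> complex \<Rightarrow> complex \<Rightarrow> complex" where
  "lower_branch c a z = exp (c * z) * (\<i> * z) powr a * exp (- a * (\<i> * of_real (3 * pi / 2)))"

definition upper_branch :: "complex \<Rightarrow> complex \<Rightarrow> complex \<Rightarrow> complex" where
  "upper_branch c a z = exp (c * z) * (- \<i> * z) powr a * exp (- a * (\<i> * of_real (pi / 2)))"

lemma hankel_kernel_eq_lower_branch:
  assumes "Im z \<le> 0" "z \<notin> \<real>\<^sub>\<le>\<^sub>0"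
  shows "hankel_kernel c x z = lower_branch c (- x - 1) z"
proof -
  define a where "a = - x - 1"
  have "a * (Ln z + \<i> * of_real (pi / 2)) + (- a * (\<i> * of_real (3 * pi / 2)))
      = a * (Ln z - \<i> * of_real pi)"
    by (simp add: algebra_simps)
  thus ?thesis
    unfolding hankel_kernel_def lower_branch_def hankel_pow_def a_def [symmetric]
      powr_ii_mult_lower[OF assms]
    by (simp add: mult.assoc add_diff_eq [symmetric] flip: exp_add)
qed

lemma hankel_kernel_eq_upper_branch:
  assumes "0 \<le> Im z" "z \<notin> \<real>\<^sub>\<le>\<^sub>0"
  shows "hankel_kernel c x z = upper_branch c (- x - 1) z"
proof -
  define a where "a = - x - 1"
  have "a * (Ln z - \<i> * of_real (pi / 2)) + (- a * (\<i> * of_real (pi / 2)))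
      = a * (Ln z - \<i> * of_real pi)"
    by (simp add: algebra_simps)
  thus ?thesis
    unfolding hankel_kernel_def upper_branch_def hankel_pow_def a_def [symmetric]
      powr_minus_ii_mult_upper[OF assms]
    by (simp add: mult.assoc add_diff_eq [symmetric] flip: exp_add)
qed

lemma real_nonpos_cases:
  assumes "Im z = 0" "Re z \<le> 0"
  obtains r where "0 \<le> r" "z = - of_real r"
  using assms that[of "- Re z"] by (simp add: complex_eq_iff)

lemma lower_branch_nonpos_real:
  assumes "Im z = 0" "Re z \<le> 0"
  shows "lower_branch c a z = exp (- a * (\<i> * of_real (2 * pi))) * (exp (c * z) * (- z) powr a)"
proof -
  define K1 where "K1 = exp (- a * (\<i> * of_real (3 * pi / 2)))"
  define K where "K = exp (- a * (\<i> * of_real (2 * pi)))"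
  obtain r where r: "0 \<le> r" "z = - of_real r" using assms by (rule real_nonpos_cases)
  show ?thesis
  proof (cases "r = 0")
    case False
    hence "0 < r" using r by simp
    have "a * (- (\<i> * of_real (pi / 2))) + (- a * (\<i> * of_real (3 * pi / 2)))
        = - a * (\<i> * of_real (2 * pi))"
      by (simp add: algebra_simps)
    hence "exp (a * (- (\<i> * of_real (pi / 2)))) * K1 = K"
      unfolding K1_def K_def by (simp add: mult_ac flip: exp_add)
    moreover have rot: "\<i> * - of_real r = of_real r * (- \<i>)" by simp
    ultimately show ?thesis
      unfolding lower_branch_def K1_def [symmetric] K_def [symmetric] r(2) rot
        powr_of_real_ii_mult[OF \<open>0 < r\<close>]
      by (simp add: powr_of_real_ii_mult(3)[OF \<open>0 < r\<close>] algebra_simps)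
  qed (simp add: lower_branch_def r)
qed

lemma upper_branch_nonpos_real:
  assumes "Im z = 0" "Re z \<le> 0"
  shows "upper_branch c a z = exp (c * z) * (- z) powr a"
proof -
  define K2 where "K2 = exp (- a * (\<i> * of_real (pi / 2)))"
  obtain r where r: "0 \<le> r" "z = - of_real r" using assms by (rule real_nonpos_cases)
  show ?thesis
  proof (cases "r = 0")
    case False
    hence "0 < r" using r by simp
    have "exp (a * (\<i> * of_real (pi / 2))) * K2 = 1"
      unfolding K2_def by (simp flip: exp_add)
    moreover have rot: "- \<i> * - of_real r = of_real r * \<i>" by simp
    ultimately show ?thesis
      unfolding upper_branch_def K2_def [symmetric] r(2) rot powr_of_real_ii_mult[OF \<open>0 < r\<close>]
      by (simp add: powr_of_real_ii_mult(3)[OF \<open>0 < r\<close>] algebra_simps)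
  qed (simp add: upper_branch_def r)
qed

lemma lower_branch_eq_upper_branch_nonneg_real:
  assumes "Im z = 0" "0 \<le> Re z"
  shows "lower_branch c a z = upper_branch c a z"
proof -
  define K1 where "K1 = exp (- a * (\<i> * of_real (3 * pi / 2)))"
  define K2 where "K2 = exp (- a * (\<i> * of_real (pi / 2)))"
  obtain r where r: "0 \<le> r" "z = of_real r"
    using assms that[of "Re z"] by (simp add: complex_eq_iff)
  show ?thesis
  proof (cases "r = 0")
    case False
    hence "0 < r" using r by simp
    have "a * (\<i> * of_real (pi / 2)) + (- a * (\<i> * of_real (3 * pi / 2)))
        = a * (- (\<i> * of_real (pi / 2))) + (- a * (\<i> * of_real (pi / 2)))"
      by (simp add: algebra_simps)
    hence "exp (a * (\<i> * of_real (pi / 2))) * K1 = exp (a * (- (\<i> * of_real (pi / 2)))) * K2"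
      unfolding K1_def K2_def by (simp flip: exp_add)
    moreover have rot: "\<i> * of_real r = of_real r * \<i>" "- \<i> * of_real r = of_real r * (- \<i>)"
      by simp_all
    ultimately show ?thesis
      unfolding lower_branch_def upper_branch_def K1_def [symmetric] K2_def [symmetric] r(2) rot
        powr_of_real_ii_mult[OF \<open>0 < r\<close>]
      by (simp add: algebra_simps)
  qed (simp add: lower_branch_def upper_branch_def r)
qed

lemma continuous_on_lower_branch:
  assumes "0 < Re a"
  shows "continuous_on {z. Im z \<le> 0} (lower_branch c a)"
proof -
  have "continuous_on {z. Im z \<le> 0} (\<lambda>z. (\<i> * z) powr a)"
    using assms by (rule continuous_on_powr_linear) (auto simp: complex_nonpos_Reals_iff complex_eq_iff)
  thus ?thesis
    unfolding lower_branch_def by (intro continuous_on_mult) (auto intro!: continuous_intros)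
qed

lemma continuous_on_upper_branch:
  assumes "0 < Re a"
  shows "continuous_on {z. 0 \<le> Im z} (upper_branch c a)"
proof -
  have "continuous_on {z. 0 \<le> Im z} (\<lambda>z. (- \<i> * z) powr a)"
    using assms by (rule continuous_on_powr_linear) (auto simp: complex_nonpos_Reals_iff complex_eq_iff)
  thus ?thesis
    unfolding upper_branch_def by (intro continuous_on_mult) (auto intro!: continuous_intros)
qed

lemma holomorphic_on_lower_branch: "lower_branch c a holomorphic_on {z. Im z < 0}"
  unfolding lower_branch_def by (intro holomorphic_intros) (auto simp: complex_nonpos_Reals_iff)

lemma holomorphic_on_upper_branch: "upper_branch c a holomorphic_on {z. 0 < Im z}"
  unfolding upper_branch_def by (intro holomorphic_intros) (auto simp: complex_nonpos_Reals_iff)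

lemma continuous_on_segment_lower_branch:
  assumes "0 < Re a" "Im u \<le> 0" "Im v \<le> 0"
  shows "continuous_on (closed_segment u v) (lower_branch c a)"
proof -
  have "closed_segment u v \<subseteq> {z. Im z \<le> 0}"
    using assms(2,3) by (intro closed_segment_subset) (auto simp: convex_halfspace_Im_le)
  thus ?thesis using continuous_on_lower_branch[OF assms(1)] by (rule continuous_on_subset [rotated])
qed

lemma continuous_on_segment_upper_branch:
  assumes "0 < Re a" "0 \<le> Im u" "0 \<le> Im v"
  shows "continuous_on (closed_segment u v) (upper_branch c a)"
proof -
  have "closed_segment u v \<subseteq> {z. 0 \<le> Im z}"
    using assms(2,3) by (intro closed_segment_subset) (auto simp: convex_halfspace_Im_ge)
  thus ?thesis using continuous_on_upper_branch[OF assms(1)] by (rule continuous_on_subset [rotated])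
qed

section \<open>The Hankel integral for \<open>Re x < -1\<close>\<close>

lemma has_contour_integral_hankel_kernel_lower:
  assumes a: "a = - x - 1" "0 < Re a" and uv: "Im u \<le> 0" "Im v \<le> 0"
    and slit: "closed_segment u v \<subseteq> - \<real>\<^sub>\<le>\<^sub>0"
  shows "(hankel_kernel c x has_contour_integral contour_integral (linepath u v) (lower_branch c a))
           (linepath u v)"
proof (rule has_contour_integral_eq)
  show "(lower_branch c a has_contour_integral contour_integral (linepath u v) (lower_branch c a))
      (linepath u v)"
    using a uv by (intro has_contour_integral_integral contour_integrable_continuous_linepath
        continuous_on_segment_lower_branch)
  fix z assume z: "z \<in> path_image (linepath u v)"
  hence "Im z \<le> 0"
    using uv closed_segment_Im_between[of z u v] closed_segment_Im_between[of z v u]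
    by (cases "Im u \<le> Im v") (auto simp: closed_segment_commute)
  thus "lower_branch c a z = hankel_kernel c x z"
    using z slit by (auto simp: hankel_kernel_eq_lower_branch a)
qed

lemma has_contour_integral_hankel_kernel_upper:
  assumes a: "a = - x - 1" "0 < Re a" and uv: "0 \<le> Im u" "0 \<le> Im v"
    and slit: "closed_segment u v \<subseteq> - \<real>\<^sub>\<le>\<^sub>0"
  shows "(hankel_kernel c x has_contour_integral contour_integral (linepath u v) (upper_branch c a))
           (linepath u v)"
proof (rule has_contour_integral_eq)
  show "(upper_branch c a has_contour_integral contour_integral (linepath u v) (upper_branch c a))
      (linepath u v)"
    using a uv by (intro has_contour_integral_integral contour_integrable_continuous_linepath
        continuous_on_segment_upper_branch)
  fix z assume z: "z \<in> path_image (linepath u v)"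
  hence "0 \<le> Im z"
    using uv closed_segment_Im_between[of z u v] closed_segment_Im_between[of z v u]
    by (cases "Im u \<le> Im v") (auto simp: closed_segment_commute)
  thus "upper_branch c a z = hankel_kernel c x z"
    using z slit by (auto simp: hankel_kernel_eq_upper_branch a)
qed

lemma hankel_path_segments_in_slit_plane:
  "closed_segment (- of_real R - \<i>) (1 - \<i>) \<subseteq> - \<real>\<^sub>\<le>\<^sub>0"
  "closed_segment (1 - \<i>) (1 + \<i>) \<subseteq> - \<real>\<^sub>\<le>\<^sub>0"
  "closed_segment (1 - \<i>) 1 \<subseteq> - \<real>\<^sub>\<le>\<^sub>0"
  "closed_segment 1 (1 + \<i>) \<subseteq> - \<real>\<^sub>\<le>\<^sub>0"
  "closed_segment (1 + \<i>) (- of_real R + \<i>) \<subseteq> - \<real>\<^sub>\<le>\<^sub>0"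
  by (auto simp: complex_nonpos_Reals_iff dest: closed_segment_Im_const[of _ _ _ "-1"]
        closed_segment_Re_const[of _ _ _ 1] closed_segment_Im_const[of _ _ _ 1])

lemma hankel_path_in_slit_plane: "path_image (hankel_path R) \<subseteq> - \<real>\<^sub>\<le>\<^sub>0"
  using hankel_path_segments_in_slit_plane by (simp add: hankel_path_def path_image_join)

lemma hankel_integral_branches:
  assumes a: "a = - x - 1" "0 < Re a"
  shows "contour_integral (hankel_path R) (hankel_kernel c x)
       = contour_integral (linepath (- of_real R - \<i>) (1 - \<i>)) (lower_branch c a)
         + ((contour_integral (linepath (1 - \<i>) 1) (lower_branch c a)
             + contour_integral (linepath 1 (1 + \<i>)) (upper_branch c a))
            + contour_integral (linepath (1 + \<i>) (- of_real R + \<i>)) (upper_branch c a))"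
proof -
  have lower: "(hankel_kernel c x has_contour_integral contour_integral (linepath u v) (lower_branch c a))
      (linepath u v)" if "Im u \<le> 0" "Im v \<le> 0" "closed_segment u v \<subseteq> - \<real>\<^sub>\<le>\<^sub>0" for u v
    using has_contour_integral_hankel_kernel_lower[OF a that] .
  have upper: "(hankel_kernel c x has_contour_integral contour_integral (linepath u v) (upper_branch c a))
      (linepath u v)" if "0 \<le> Im u" "0 \<le> Im v" "closed_segment u v \<subseteq> - \<real>\<^sub>\<le>\<^sub>0" for u v
    using has_contour_integral_hankel_kernel_upper[OF a that] .
  have "(hankel_kernel c x has_contour_integral contour_integral (linepath (1 - \<i>) 1) (lower_branch c a))
      (linepath (1 - \<i>) 1)"
    by (rule lower) (simp_all add: hankel_path_segments_in_slit_plane)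
  moreover have "(hankel_kernel c x has_contour_integral contour_integral (linepath 1 (1 + \<i>)) (upper_branch c a))
      (linepath 1 (1 + \<i>))"
    by (rule upper) (simp_all add: hankel_path_segments_in_slit_plane)
  ultimately have "(hankel_kernel c x has_contour_integral
          contour_integral (linepath (1 - \<i>) 1) (lower_branch c a)
          + contour_integral (linepath 1 (1 + \<i>)) (upper_branch c a)) (linepath (1 - \<i>) (1 + \<i>))"
    by (rule has_contour_integral_split[of _ _ _ _ _ _ "1/2"]) (auto simp: scaleR_conv_of_real)
  hence "(hankel_kernel c x has_contour_integral
          contour_integral (linepath (- of_real R - \<i>) (1 - \<i>)) (lower_branch c a)
          + ((contour_integral (linepath (1 - \<i>) 1) (lower_branch c a)
              + contour_integral (linepath 1 (1 + \<i>)) (upper_branch c a))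
             + contour_integral (linepath (1 + \<i>) (- of_real R + \<i>)) (upper_branch c a)))
        (hankel_path R)"
    unfolding hankel_path_def using hankel_path_segments_in_slit_plane
    by (intro has_contour_integral_join valid_path_join lower upper) auto
  thus ?thesis by (rule contour_integral_unique)
qed

lemma contour_integral_branches_positive_axis:
  assumes "0 < Re a"
  shows "contour_integral (linepath 0 1) (upper_branch c a) = - contour_integral (linepath 1 0) (lower_branch c a)"
proof -
  have "contour_integral (linepath 0 1) (upper_branch c a) = contour_integral (linepath 0 1) (lower_branch c a)"
    by (intro contour_integral_eq lower_branch_eq_upper_branch_nonneg_real [symmetric])
       (auto simp: closed_segment_def)
  also have "\<dots> = - contour_integral (linepath 1 0) (lower_branch c a)"
    using contour_integral_reverse_linepath[OF continuous_on_segment_lower_branch[OF assms], of 1 0]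
    by simp
  finally show ?thesis .
qed

lemma contour_integral_branches_negative_axis:
  assumes a: "0 < Re a" and R: "0 \<le> R"
  shows "contour_integral (linepath 0 (- of_real R)) (lower_branch c a)
           = - exp (- a * (\<i> * of_real (2 * pi)))
               * contour_integral (linepath (- of_real R) 0) (\<lambda>z. exp (c * z) * (- z) powr a)"
    and "contour_integral (linepath (- of_real R) 0) (upper_branch c a)
           = contour_integral (linepath (- of_real R) 0) (\<lambda>z. exp (c * z) * (- z) powr a)"
proof -
  define q where "q z = exp (c * z) * (- z) powr a" for z
  have real_segment: "Im z = 0 \<and> Re z \<le> 0" if "z \<in> closed_segment (- of_real R) 0" for z :: complex
    using that R by (auto simp: closed_segment_def)
  have "closed_segment (- of_real R) 0 \<subseteq> {z. Re z \<le> 0}"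
    using R by (intro closed_segment_subset) (auto simp: convex_halfspace_Re_le)
  hence cont: "continuous_on (closed_segment (- of_real R) 0) q"
    using continuous_on_ray_integrand[OF a] unfolding q_def by (rule continuous_on_subset [rotated])
  have "contour_integral (linepath 0 (- of_real R)) (lower_branch c a)
      = contour_integral (linepath 0 (- of_real R)) (\<lambda>z. exp (- a * (\<i> * of_real (2 * pi))) * q z)"
    using real_segment by (intro contour_integral_eq)
      (auto simp: q_def closed_segment_commute lower_branch_nonpos_real)
  also have "\<dots> = exp (- a * (\<i> * of_real (2 * pi))) * contour_integral (linepath 0 (- of_real R)) q"
    using cont by (intro contour_integral_lmul contour_integrable_continuous_linepath)
      (simp add: closed_segment_commute)
  also have "\<dots> = - exp (- a * (\<i> * of_real (2 * pi))) * contour_integral (linepath (- of_real R) 0) q"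
    using contour_integral_reverse_linepath[OF cont] by simp
  finally show "contour_integral (linepath 0 (- of_real R)) (lower_branch c a)
      = - exp (- a * (\<i> * of_real (2 * pi)))
          * contour_integral (linepath (- of_real R) 0) (\<lambda>z. exp (c * z) * (- z) powr a)"
    by (simp add: q_def [abs_def])
  show "contour_integral (linepath (- of_real R) 0) (upper_branch c a)
      = contour_integral (linepath (- of_real R) 0) (\<lambda>z. exp (c * z) * (- z) powr a)"
    using real_segment by (intro contour_integral_eq) (auto simp: upper_branch_nonpos_real)
qed

text \<open>Cauchy's theorem on two pentagons, one in each closed half-plane, collapses the contour onto
  the negative real axis; what remains are the two short vertical sides at \<open>Re z = - R\<close>.\<close>

lemma hankel_integral_decomposition:
  assumes a: "a = - x - 1" "0 < Re a" and R: "0 < R"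
  shows "contour_integral (hankel_path R) (hankel_kernel c x)
       = (exp (- a * (\<i> * of_real (2 * pi))) - 1)
           * contour_integral (linepath (- of_real R) 0) (\<lambda>z. exp (c * z) * (- z) powr a)
         - contour_integral (linepath (- of_real R) (- of_real R - \<i>)) (lower_branch c a)
         - contour_integral (linepath (- of_real R + \<i>) (- of_real R)) (upper_branch c a)"
proof -
  define A B E A' B' where "A = - of_real R - \<i>" and "B = 1 - \<i>" and "E = - (of_real R :: complex)"
    and "A' = 1 + \<i>" and "B' = - of_real R + \<i>"
  define Q where "Q = contour_integral (linepath E 0) (\<lambda>z. exp (c * z) * (- z) powr a)"
  have lower: "contour_integral (linepath A B) (lower_branch c a) + contour_integral (linepath B 1) (lower_branch c a)
      + contour_integral (linepath 1 0) (lower_branch c a) + contour_integral (linepath 0 E) (lower_branch c a)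
      + contour_integral (linepath E A) (lower_branch c a) = 0"
    using continuous_on_lower_branch[OF a(2)] holomorphic_on_lower_branch
    by (intro contour_integral_pentagon_convex[OF convex_halfspace_Im_le])
       (auto simp: interior_halfplanes A_def B_def E_def)
  have upper: "contour_integral (linepath A' B') (upper_branch c a) + contour_integral (linepath B' E) (upper_branch c a)
      + contour_integral (linepath E 0) (upper_branch c a) + contour_integral (linepath 0 1) (upper_branch c a)
      + contour_integral (linepath 1 A') (upper_branch c a) = 0"
    using continuous_on_upper_branch[OF a(2)] holomorphic_on_upper_branch
    by (intro contour_integral_pentagon_convex[OF convex_halfspace_Im_ge])
       (auto simp: interior_halfplanes A'_def B'_def E_def)
  have negative_axis: "contour_integral (linepath 0 E) (lower_branch c a) = - exp (- a * (\<i> * of_real (2 * pi))) * Q"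
       "contour_integral (linepath E 0) (upper_branch c a) = Q"
    using contour_integral_branches_negative_axis[OF a(2), of R c] R by (simp_all add: E_def Q_def)
  have "contour_integral (hankel_path R) (hankel_kernel c x)
      = (contour_integral (linepath A B) (lower_branch c a) + contour_integral (linepath B 1) (lower_branch c a))
        + (contour_integral (linepath 1 A') (upper_branch c a)
           + contour_integral (linepath A' B') (upper_branch c a))"
    unfolding hankel_integral_branches[OF a] A_def B_def A'_def B'_def by (simp add: add_ac)
  also have "contour_integral (linepath A B) (lower_branch c a) + contour_integral (linepath B 1) (lower_branch c a)
      = - (contour_integral (linepath 1 0) (lower_branch c a) + contour_integral (linepath 0 E) (lower_branch c a)
           + contour_integral (linepath E A) (lower_branch c a))"
    using lower by (simp only: add.assoc eq_neg_iff_add_eq_0)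
  also have "contour_integral (linepath 1 A') (upper_branch c a) + contour_integral (linepath A' B') (upper_branch c a)
      = - (contour_integral (linepath B' E) (upper_branch c a) + contour_integral (linepath E 0) (upper_branch c a)
           + contour_integral (linepath 0 1) (upper_branch c a))"
    using upper by (simp only: add_ac eq_neg_iff_add_eq_0)
  finally have "contour_integral (hankel_path R) (hankel_kernel c x)
      = (exp (- a * (\<i> * of_real (2 * pi))) - 1) * Q
        - contour_integral (linepath E A) (lower_branch c a)
        - contour_integral (linepath B' E) (upper_branch c a)"
    by (simp only: contour_integral_branches_positive_axis[OF a(2)] negative_axis) (simp add: algebra_simps)
  thus ?thesis
    by (simp only: A_def B'_def E_def Q_def)
qed

lemma hankel_integral_tendsto_base:
  assumes c: "0 < Re c" and x: "Re x < -1"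
  shows "((\<lambda>R. contour_integral (hankel_path R) (hankel_kernel c x))
           \<longlongrightarrow> (exp (\<i> * of_real (2 * pi) * (x + 1)) - 1) * exp (x * Ln c) * Gamma (- x)) at_top"
proof -
  define a where "a = - x - 1"
  have a: "0 < Re a" using x by (simp add: a_def)
  have ray: "((\<lambda>R. contour_integral (linepath (- of_real R) 0) (\<lambda>z. exp (c * z) * (- z) powr a))
      \<longlongrightarrow> exp (x * Ln c) * Gamma (- x)) at_top"
    using ray_integral_tendsto_Gamma[OF c, of "- x"] x by (simp add: a_def)
  have "((\<lambda>R. contour_integral (linepath (- of_real R + \<i> * of_real 0) (- of_real R + \<i> * of_real (-1)))
      (lower_branch c a)) \<longlongrightarrow> 0) at_top"
    using continuous_on_segment_lower_branch[OF a, unfolded lower_branch_def [abs_def]]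
    unfolding lower_branch_def [abs_def] by (intro vertical_segment_integral_tendsto_0 c a) auto
  hence lower: "((\<lambda>R. contour_integral (linepath (- of_real R) (- of_real R - \<i>)) (lower_branch c a))
      \<longlongrightarrow> 0) at_top"
    by simp
  have "((\<lambda>R. contour_integral (linepath (- of_real R + \<i> * of_real 1) (- of_real R + \<i> * of_real 0))
      (upper_branch c a)) \<longlongrightarrow> 0) at_top"
    using continuous_on_segment_upper_branch[OF a, unfolded upper_branch_def [abs_def]]
    unfolding upper_branch_def [abs_def] by (intro vertical_segment_integral_tendsto_0 c a) auto
  hence upper: "((\<lambda>R. contour_integral (linepath (- of_real R + \<i>) (- of_real R)) (upper_branch c a))
      \<longlongrightarrow> 0) at_top"
    by simp
  have "((\<lambda>R. (exp (- a * (\<i> * of_real (2 * pi))) - 1)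
           * contour_integral (linepath (- of_real R) 0) (\<lambda>z. exp (c * z) * (- z) powr a)
         - contour_integral (linepath (- of_real R) (- of_real R - \<i>)) (lower_branch c a)
         - contour_integral (linepath (- of_real R + \<i>) (- of_real R)) (upper_branch c a))
      \<longlongrightarrow> (exp (- a * (\<i> * of_real (2 * pi))) - 1) * (exp (x * Ln c) * Gamma (- x)) - 0 - 0) at_top"
    by (intro tendsto_intros ray lower upper)
  note lim = this
  have ev: "eventually (\<lambda>R. (exp (- a * (\<i> * of_real (2 * pi))) - 1)
           * contour_integral (linepath (- of_real R) 0) (\<lambda>z. exp (c * z) * (- z) powr a)
         - contour_integral (linepath (- of_real R) (- of_real R - \<i>)) (lower_branch c a)
         - contour_integral (linepath (- of_real R + \<i>) (- of_real R)) (upper_branch c a)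
      = contour_integral (hankel_path R) (hankel_kernel c x)) at_top"
    using eventually_gt_at_top[of 0]
    by eventually_elim (simp add: hankel_integral_decomposition[OF a_def a])
  have val: "(exp (- a * (\<i> * of_real (2 * pi))) - 1) * (exp (x * Ln c) * Gamma (- x)) - 0 - 0
      = (exp (\<i> * of_real (2 * pi) * (x + 1)) - 1) * exp (x * Ln c) * Gamma (- x)"
    by (simp add: a_def algebra_simps)
  show ?thesis
    using Lim_transform_eventually[OF lim ev] unfolding val .
qed

section \<open>Continuation in \<open>x\<close>\<close>

definition hankel_integral :: "complex \<Rightarrow> complex \<Rightarrow> real \<Rightarrow> complex" where
  "hankel_integral c x R = contour_integral (hankel_path R) (hankel_kernel c x)"

definition hankel_value :: "complex \<Rightarrow> complex \<Rightarrow> complex" where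
  "hankel_value c x = (exp (\<i> * of_real (2 * pi) * (x + 1)) - 1) * exp (x * Ln c) * Gamma (- x)"

lemma holomorphic_on_hankel_kernel: "hankel_kernel c x holomorphic_on - \<real>\<^sub>\<le>\<^sub>0"
  unfolding hankel_kernel_def hankel_pow_def by (intro holomorphic_intros) auto

lemma hankel_kernel_contour_integrable: "hankel_kernel c x contour_integrable_on hankel_path R"
  using hankel_path_in_slit_plane
  by (intro contour_integrable_holomorphic_simple[OF holomorphic_on_hankel_kernel])
     (auto simp: hankel_path_def open_Compl)

lemma hankel_kernel_has_derivative:
  assumes z: "z \<notin> \<real>\<^sub>\<le>\<^sub>0"
  shows "(hankel_kernel c (x - 1) has_field_derivative
           c * hankel_kernel c (x - 1) z + x * hankel_kernel c x z) (at z)"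
proof -
  have z0: "z \<noteq> 0" using z by auto
  define L where "L = Ln z - \<i> * of_real pi"
  have shift: "hankel_pow (x - 1) = (\<lambda>z. exp (- x * (Ln z - \<i> * of_real pi)))"
    by (simp add: hankel_pow_def fun_eq_iff)
  have "(- x - 1) * L = - x * L + (- Ln z) + \<i> * of_real pi" by (simp add: L_def algebra_simps)
  hence "exp ((- x - 1) * L) = exp (- x * L) * exp (- Ln z) * exp (\<i> * of_real pi)"
    by (simp only: exp_add)
  also have "exp (\<i> * of_real pi) = -1" by (simp add: exp_eq_polar)
  also have "exp (- Ln z) = inverse z" using z0 by (simp add: exp_minus)
  finally have key: "exp ((- x - 1) * L) = - exp (- x * L) / z" by (simp add: field_simps)
  have "((\<lambda>z. exp (c * z) * exp (- x * (Ln z - \<i> * of_real pi))) has_field_derivative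
          exp (c * z) * c * exp (- x * L) + exp (c * z) * (exp (- x * L) * (- x * inverse z))) (at z)"
    unfolding L_def using z by (auto intro!: derivative_eq_intros)
  moreover have "exp (c * z) * c * exp (- x * L) + exp (c * z) * (exp (- x * L) * (- x * inverse z))
        = c * hankel_kernel c (x - 1) z + x * hankel_kernel c x z"
    unfolding hankel_kernel_def shift hankel_pow_def L_def [symmetric] key
    using z0 by (simp add: field_simps)
  ultimately show ?thesis unfolding hankel_kernel_def shift by simp
qed

text \<open>The integrand on the left is the derivative of \<open>hankel_kernel c (x - 1)\<close> on the slit plane.\<close>

lemma hankel_integral_recurrence:
  "c * hankel_integral c (x - 1) R + x * hankel_integral c x R
     = hankel_kernel c (x - 1) (- of_real R + \<i>) - hankel_kernel c (x - 1) (- of_real R - \<i>)"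
proof -
  have "((\<lambda>z. c * hankel_kernel c (x - 1) z + x * hankel_kernel c x z) has_contour_integral
          hankel_kernel c (x - 1) (pathfinish (hankel_path R))
          - hankel_kernel c (x - 1) (pathstart (hankel_path R))) (hankel_path R)"
    by (rule contour_integral_primitive[where S = "- \<real>\<^sub>\<le>\<^sub>0"])
       (use hankel_path_in_slit_plane hankel_kernel_has_derivative in
         \<open>auto intro: has_field_derivative_at_within simp: hankel_path_def\<close>)
  hence "contour_integral (hankel_path R) (\<lambda>z. c * hankel_kernel c (x - 1) z + x * hankel_kernel c x z)
      = hankel_kernel c (x - 1) (- of_real R + \<i>) - hankel_kernel c (x - 1) (- of_real R - \<i>)"
    by (simp add: contour_integral_unique hankel_path_def)
  thus ?thesis
    unfolding hankel_integral_def using hankel_kernel_contour_integrable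
    by (simp add: contour_integral_add contour_integral_lmul contour_integrable_lmul)
qed

lemma norm_hankel_kernel_horizontal_le:
  fixes c x :: complex
  assumes y: "\<bar>y\<bar> = 1" and R: "0 < R"
  defines "a \<equiv> - x - 1"
  shows "norm (hankel_kernel c x (- of_real R + \<i> * of_real y))
    \<le> exp \<bar>Im c\<bar> * exp (\<bar>Im a\<bar> * pi) * norm (exp (- a * (\<i> * of_real pi)))
       * ((R + 1) powr \<bar>Re a\<bar> * exp (- Re c * R))"
proof -
  define z where "z = - of_real R + \<i> * of_real y"
  define K where "K = exp (- a * (\<i> * of_real pi))"
  have z0: "z \<noteq> 0" using y by (auto simp: z_def complex_eq_iff)
  have "Re (c * z) = - Re c * R - Im c * y" by (simp add: z_def)
  also have "\<dots> \<le> - Re c * R + \<bar>Im c\<bar>"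
    using y by (simp add: abs_mult) (metis abs_ge_minus_self abs_mult mult.right_neutral)
  finally have exp_le: "norm (exp (c * z)) \<le> exp \<bar>Im c\<bar> * exp (- Re c * R)"
    by (simp add: add.commute flip: exp_add)
  have lower: "1 \<le> norm z" using abs_Im_le_cmod[of z] y by (simp add: z_def)
  have upper: "norm z \<le> R + 1" using cmod_le[of z] y R by (simp add: z_def)
  have "norm z powr Re a \<le> (R + 1) powr \<bar>Re a\<bar>"
  proof (cases "0 \<le> Re a")
    case True
    thus ?thesis using lower upper by (simp add: powr_mono2)
  next
    case False
    have "norm z powr Re a = exp (Re a * ln (norm z))" using lower z0 by (simp add: powr_def)
    also have "\<dots> \<le> 1" using False lower by (simp add: mult_nonpos_nonneg)
    also have "1 \<le> (R + 1) powr \<bar>Re a\<bar>" using R by (intro ge_one_powr_ge_zero) auto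
    finally show ?thesis .
  qed
  hence "norm z powr Re a * exp (\<bar>Im a\<bar> * pi) \<le> (R + 1) powr \<bar>Re a\<bar> * exp (\<bar>Im a\<bar> * pi)"
    by (intro mult_right_mono) auto
  with norm_powr_le[of z a] have powr_le: "norm (z powr a) \<le> (R + 1) powr \<bar>Re a\<bar> * exp (\<bar>Im a\<bar> * pi)"
    by (rule order_trans)
  have "hankel_pow x z = z powr a * K"
    using z0 by (simp add: hankel_pow_def powr_def K_def a_def algebra_simps flip: exp_add)
  hence "norm (hankel_kernel c x z) = norm (exp (c * z)) * norm (z powr a) * norm K"
    by (simp add: hankel_kernel_def norm_mult)
  also have "\<dots> \<le> (exp \<bar>Im c\<bar> * exp (- Re c * R)) * ((R + 1) powr \<bar>Re a\<bar> * exp (\<bar>Im a\<bar> * pi)) * norm K"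
    using exp_le powr_le by (intro mult_right_mono mult_mono) auto
  finally show ?thesis
    by (simp add: z_def K_def algebra_simps)
qed

lemma hankel_kernel_horizontal_tendsto_0:
  assumes c: "0 < Re c" and y: "\<bar>y\<bar> = 1"
  shows "((\<lambda>R. hankel_kernel c x (- of_real R + \<i> * of_real y)) \<longlongrightarrow> 0) at_top"
proof (rule Lim_null_comparison)
  define a where "a = - x - 1"
  define M where "M = exp \<bar>Im c\<bar> * exp (\<bar>Im a\<bar> * pi) * norm (exp (- a * (\<i> * of_real pi)))"
  show "eventually (\<lambda>R. norm (hankel_kernel c x (- of_real R + \<i> * of_real y))
          \<le> M * ((R + 1) powr \<bar>Re a\<bar> * exp (- Re c * R))) at_top"
    using eventually_gt_at_top[of 0]
    by eventually_elim (unfold M_def a_def, rule norm_hankel_kernel_horizontal_le[OF y])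
  show "((\<lambda>R. M * ((R + 1) powr \<bar>Re a\<bar> * exp (- Re c * R))) \<longlongrightarrow> 0) at_top"
    using tendsto_mult_left[OF powr_mult_exp_neg_tendsto_0(2)[OF c], of M] by simp
qed

lemma hankel_integral_tendsto_step:
  assumes c: "0 < Re c" and x: "x \<noteq> 0" and l: "(hankel_integral c (x - 1) \<longlongrightarrow> l) at_top"
  shows "(hankel_integral c x \<longlongrightarrow> - c * l / x) at_top"
proof -
  have "((\<lambda>R. (hankel_kernel c (x - 1) (- of_real R + \<i> * of_real 1)
              - hankel_kernel c (x - 1) (- of_real R + \<i> * of_real (-1))
              - c * hankel_integral c (x - 1) R) / x) \<longlongrightarrow> (0 - 0 - c * l) / x) at_top"
    by (intro tendsto_intros hankel_kernel_horizontal_tendsto_0 c l x) auto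
  moreover have "(hankel_kernel c (x - 1) (- of_real R + \<i> * of_real 1)
              - hankel_kernel c (x - 1) (- of_real R + \<i> * of_real (-1))
              - c * hankel_integral c (x - 1) R) / x = hankel_integral c x R" for R
  proof -
    have "- of_real R + \<i> * of_real 1 = - of_real R + \<i>" "- of_real R + \<i> * of_real (-1) = - of_real R - \<i>"
      by simp_all
    thus ?thesis
      using hankel_integral_recurrence[of c x R] x by (simp only:) (simp add: field_simps)
  qed
  ultimately show ?thesis by simp
qed

lemma Gamma_minus_nonzero: "x \<notin> \<int> \<Longrightarrow> Gamma (- x) \<noteq> 0"
  by (metis Gamma_eq_zero_iff Ints_minus minus_minus nonpos_Ints_Int)

lemma hankel_value_recurrence:
  assumes c: "0 < Re c" and x: "x \<notin> \<int>"
  shows "- c * hankel_value c (x - 1) / x = hankel_value c x"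
proof -
  have x0: "x \<noteq> 0" using x by auto
  have c0: "c \<noteq> 0" using c by auto
  have "- x \<notin> \<int>\<^sub>\<le>\<^sub>0" using x by (metis Ints_minus minus_minus nonpos_Ints_Int)
  hence Gamma: "Gamma (- (x - 1)) = - x * Gamma (- x)"
    using Gamma_plus1[of "- x"] by (simp add: algebra_simps)
  have "\<i> * of_real (2 * pi) * (x + 1) = \<i> * of_real (2 * pi) * (x - 1 + 1) + \<i> * (of_int 1 * (of_real pi * 2))"
    by (simp add: algebra_simps)
  hence period: "exp (\<i> * of_real (2 * pi) * (x - 1 + 1)) = exp (\<i> * of_real (2 * pi) * (x + 1))"
    by (simp only: exp_plus_2pin)
  have shift: "exp ((x - 1) * Ln c) = exp (x * Ln c) / c"
    using c0 by (simp add: algebra_simps exp_diff)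
  show ?thesis
    unfolding hankel_value_def period Gamma shift using x0 c0 by (simp add: field_simps)
qed

lemma hankel_integral_tendsto:
  assumes c: "0 < Re c" and x: "x \<notin> \<int>"
  shows "(hankel_integral c x \<longlongrightarrow> hankel_value c x) at_top"
proof -
  have induct: "(hankel_integral c y \<longlongrightarrow> hankel_value c y) at_top" if "y \<notin> \<int>" "Re y < real n - 1" for n y
    using that
  proof (induction n arbitrary: y)
    case 0
    thus ?case
      unfolding hankel_integral_def [abs_def] hankel_value_def
      using hankel_integral_tendsto_base[OF c] by simp
  next
    case (Suc n)
    have "y - 1 \<notin> \<int>" using Suc.prems(1) by (metis Ints_1 Ints_add diff_add_cancel)
    hence "(hankel_integral c (y - 1) \<longlongrightarrow> hankel_value c (y - 1)) at_top"
      using Suc by simp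
    moreover have "y \<noteq> 0" using Suc.prems(1) by auto
    ultimately have "(hankel_integral c y \<longlongrightarrow> - c * hankel_value c (y - 1) / y) at_top"
      using hankel_integral_tendsto_step[OF c] by blast
    thus ?case unfolding hankel_value_recurrence[OF c Suc.prems(1)] .
  qed
  obtain n :: nat where "Re x + 1 < real n" using reals_Archimedean2 by blast
  thus ?thesis using induct[OF x, of n] by simp
qed

lemma exp_2pi_ii_minus_one:
  "exp (\<i> * of_real (2 * pi) * (x + 1)) - 1 = 2 * \<i> * sin (of_real pi * x) * exp (\<i> * of_real pi * x)"
proof -
  have "exp (\<i> * of_real (2 * pi) * (x + 1)) = exp (\<i> * (2 * of_real pi * x) + \<i> * (of_int 1 * (of_real pi * 2)))"
    by (simp add: algebra_simps)
  also have "\<dots> = exp (\<i> * (of_real pi * x)) * exp (\<i> * (of_real pi * x))"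
    by (simp only: exp_plus_2pin) (simp flip: exp_add add: algebra_simps)
  finally show ?thesis
    by (simp add: sin_exp_eq field_simps exp_minus mult.assoc)
qed

lemma hankel_integral_representation:
  assumes x: "x \<notin> \<int>" and t: "norm t < 1/2"
  shows "((\<lambda>R. exp (- \<i> * of_real pi * x) / (2 * \<i> * sin (of_real pi * x) * Gamma (- x))
                   * contour_integral (hankel_path R) (hankel_integrand x t))
              \<longlongrightarrow> gen_f x t) at_top"
proof -
  define P where "P = exp (- \<i> * of_real pi * x) / (2 * \<i> * sin (of_real pi * x) * Gamma (- x))"
  have "hankel_integrand x t = (\<lambda>z. hankel_kernel (gen_base t) x z / gen_root t)"
    by (simp add: fun_eq_iff hankel_integrand_def hankel_kernel_def gen_base_def gen_root_def
        algebra_simps flip: exp_add)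
  hence "contour_integral (hankel_path R) (hankel_integrand x t)
      = (1 / gen_root t) * hankel_integral (gen_base t) x R" for R
    unfolding hankel_integral_def by (simp add: contour_integral_div hankel_kernel_contour_integrable)
  moreover have "((\<lambda>R. P * ((1 / gen_root t) * hankel_integral (gen_base t) x R))
      \<longlongrightarrow> P * ((1 / gen_root t) * hankel_value (gen_base t) x)) at_top"
    using Re_gen_base_pos[OF t] x by (intro tendsto_intros hankel_integral_tendsto)
  moreover have "sin (of_real pi * x) \<noteq> 0"
    using x by (auto simp: sin_eq_0 field_simps)
  hence "P * ((1 / gen_root t) * hankel_value (gen_base t) x) = gen_closed x t"
    unfolding P_def hankel_value_def gen_closed_def exp_2pi_ii_minus_one
    using Gamma_minus_nonzero[OF x] by (simp add: field_simps exp_minus)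
  ultimately show ?thesis
    using gen_f_eq_gen_closed[OF t] by (simp add: P_def)
qed

theorem mainTheorem14:
  shows "(\<forall>x t. x \<notin> \<int> \<longrightarrow> norm t < 1/2 \<longrightarrow>
            ((\<lambda>R. exp (- \<i> * of_real pi * x) / (2 * \<i> * sin (of_real pi * x) * Gamma (- x))
                   * contour_integral (hankel_path R) (hankel_integrand x t))
              \<longlongrightarrow> gen_f x t) at_top)
       \<and> (\<forall>K. compact K \<longrightarrow> K \<subseteq> UNIV \<times> ball 0 (1/2) \<longrightarrow>
            uniform_limit K (\<lambda>N (x, t). \<Sum>n<N. theta_Delta n x * t ^ n / fact n)
                            (\<lambda>(x, t). gen_f x t) sequentially)
       \<and> (\<forall>x t. norm t < 1/2 \<longrightarrow>
            deriv (gen_f (x + 1)) t - 2 * deriv (gen_f x) t + x * gen_f (x - 1) t = 0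
          \<and> (1 - 2 * t) * deriv (gen_f x) t + (x - 1) * gen_f x t - 2 * x * gen_f (x - 1) t = 0)"
  using hankel_integral_representation uniform_limit_theta_Delta_series
    gen_closed_difference_ode gen_closed_ode
  by (simp add: deriv_gen_f gen_f_eq_gen_closed)

end
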